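(* Let $\mathcal T=(T_1,\dots,T_n)\in B(H)^n$, $p>1$, and let $(\lambda_k)_{k=1}^\infty\subset\mathbb C^n$ satisfy $\sum_{k=1}^\infty\operatorname{dist}^p\{\lambda_k,W_{\rm e}(\mathcal T)\}<\infty$. Then there exists an $n$-tuple $\mathcal K=(K_1,\dots,K_n)$ with each $K_j$ in the Schatten class $S_p$ such that $(\lambda_k)_{k=1}^\infty\in\mathcal D(\mathcal T+\mathcal K)$.
   Context: $H$ is an infinite-dimensional complex separable Hilbert space. $W_{\rm e}(\mathcal T)$ is the set of $\lambda\in\mathbb C^n$ such that $\langle T_jx_k,x_k\rangle\to\lambda_j$ for all $j$ for some orthonormal sequence $(x_k)$. $\mathcal D(\mathcal T)$ is the set of sequences $(\langle T_1u_k,u_k\rangle,\dots,\langle T_nu_k,u_k\rangle)_{k\ge1}$ over orthonormal bases $(u_k)$ of $H$; $\mathcal T+\mathcal K=(T_1+K_1,\dots,T_n+K_n)$. Distances use $\|\lambda\|=\max_j|\lambda_j|$. *)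

theory Defs
  imports "HOL-Analysis.Analysis"
begin

text \<open>Concrete model of an infinite-dimensional complex separable Hilbert space:
  H = l2(nat), square-summable complex sequences.\<close>

type_synonym vec = "nat \<Rightarrow> complex"
type_synonym op = "vec \<Rightarrow> vec"

definition l2 :: "vec set" where
  "l2 = {x. summable (\<lambda>k. (cmod (x k))\<^sup>2)}"

definition l2inner :: "vec \<Rightarrow> vec \<Rightarrow> complex" where
  "l2inner x y = (\<Sum>k. x k * cnj (y k))"

definition l2norm :: "vec \<Rightarrow> real" where
  "l2norm x = sqrt (\<Sum>k. (cmod (x k))\<^sup>2)"

text \<open>Bounded linear operators on H (only their action on l2 matters).\<close>
definition bounded_op :: "op \<Rightarrow> bool" where
  "bounded_op T \<longleftrightarrow>
     (\<forall>x\<in>l2. T x \<in> l2) \<and>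
     (\<forall>x\<in>l2. \<forall>y\<in>l2. T (\<lambda>i. x i + y i) = (\<lambda>i. T x i + T y i)) \<and>
     (\<forall>x\<in>l2. \<forall>c. T (\<lambda>i. c * x i) = (\<lambda>i. c * T x i)) \<and>
     (\<exists>C. \<forall>x\<in>l2. l2norm (T x) \<le> C * l2norm x)"

definition opnorm :: "op \<Rightarrow> real" where
  "opnorm T = Sup {l2norm (T x) | x. x \<in> l2 \<and> l2norm x \<le> 1}"

definition rank_le :: "op \<Rightarrow> nat \<Rightarrow> bool" where
  "rank_le F k \<longleftrightarrow> (\<exists>v. (\<forall>i<k. v i \<in> l2) \<and>
      (\<forall>x\<in>l2. \<exists>c. F x = (\<lambda>m. \<Sum>i<k. c i * v i m)))"

definition approx_num :: "op \<Rightarrow> nat \<Rightarrow> real" where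
  "approx_num K k = Inf {opnorm (\<lambda>x i. K x i - F x i) | F. bounded_op F \<and> rank_le F k}"

definition schatten :: "real \<Rightarrow> op \<Rightarrow> bool" where
  "schatten p K \<longleftrightarrow> bounded_op K \<and> summable (\<lambda>k. (approx_num K k) powr p)"

definition orthonormal_seq :: "(nat \<Rightarrow> vec) \<Rightarrow> bool" where
  "orthonormal_seq u \<longleftrightarrow> (\<forall>k. u k \<in> l2) \<and>
     (\<forall>j k. l2inner (u j) (u k) = (if j = k then 1 else 0))"

definition onb :: "(nat \<Rightarrow> vec) \<Rightarrow> bool" where
  "onb u \<longleftrightarrow> orthonormal_seq u \<and>
     (\<forall>y\<in>l2. (\<forall>k. l2inner y (u k) = 0) \<longrightarrow> y = (\<lambda>_. 0))"

text \<open>Essential numerical range of a tuple (index type 'n is {1..n}).\<close>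
definition ess_num_range :: "('n \<Rightarrow> op) \<Rightarrow> ('n \<Rightarrow> complex) set" where
  "ess_num_range T = {lam. \<exists>x. orthonormal_seq x \<and>
     (\<forall>j. (\<lambda>k. l2inner (T j (x k)) (x k)) \<longlonglongrightarrow> lam j)}"

definition diag_set :: "('n \<Rightarrow> op) \<Rightarrow> (nat \<Rightarrow> 'n \<Rightarrow> complex) set" where
  "diag_set T = {d. \<exists>u. onb u \<and> d = (\<lambda>k j. l2inner (T j (u k)) (u k))}"

definition maxdist :: "('n::finite \<Rightarrow> complex) \<Rightarrow> ('n \<Rightarrow> complex) \<Rightarrow> real" where
  "maxdist a b = Max (range (\<lambda>j. cmod (a j - b j)))"

definition setdist_max :: "('n::finite \<Rightarrow> complex) \<Rightarrow> ('n \<Rightarrow> complex) set \<Rightarrow> real" where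
  "setdist_max a S = Inf (maxdist a ` S)"

end

(*
  Choose near-best approximations mu_k in W_e(T) of the lambda_k, so that dist(lambda_k, mu_k) is
  p-summable. The main work is an orthonormal basis (u_k) whose diagonal (<T_j u_k, u_k>)_j is
  p-summably close to (mu_k). Then K_j = sum_k (lambda_k,j - <T_j u_k, u_k>) <., u_k> u_k is a diagonal
  operator with p-summable entries, hence in S_p, and T + K has diagonal (lambda_k) in the basis (u_k).

  Every mu in W_e(T) is a limit of <T x_k, x_k> along an orthonormal, hence weakly null, sequence.
  So for any finite orthonormal set and any vector r there is a unit vector y orthogonal to the set with
  <T y, y> sigma-close to mu and <T y, r>, <T r, y> sigma-small. The basis is built in stages, each
  absorbing one standard basis vector e: the part of e not yet spanned is kept as a multiple of a unit
  vector r orthogonal to the basis vectors chosen so far, and the next basis vector is the rotation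
  u = sqrt(1 - sigma) y + sqrt sigma r. Its diagonal error is O(sigma), and the unspanned part of e
  shrinks by the factor sqrt(1 - sigma). With sigma = 1/N, (2m+2)N steps push it below 1/(m+1) while the
  p-th powers of the errors add up to O(N^(1-p)), which is at most 2^-m for large N because p > 1.
  Treating every standard basis vector in infinitely many stages makes the orthonormal sequence complete.
*)

theory Submission
  imports Defs "HOL-Library.Nat_Bijection"
begin

abbreviation basis_vec :: "nat \<Rightarrow> vec" where "basis_vec i \<equiv> (\<lambda>k. if k = i then 1 else 0)"

section \<open>The sequence space l2\<close>

lemma l2_zero[simp]: "(\<lambda>_. 0) \<in> l2" by (simp add: l2_def)

lemma l2_add:
  assumes "x \<in> l2" "y \<in> l2"
  shows "(\<lambda>i. x i + y i) \<in> l2"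
proof -
  have "summable (\<lambda>k. 2 * (cmod (x k))\<^sup>2 + 2 * (cmod (y k))\<^sup>2)"
    using assms by (intro summable_add summable_mult) (auto simp: l2_def)
  moreover have "norm ((cmod (x k + y k))\<^sup>2) \<le> 2 * (cmod (x k))\<^sup>2 + 2 * (cmod (y k))\<^sup>2" for k
  proof -
    have "cmod (x k + y k) \<le> cmod (x k) + cmod (y k)" by (rule norm_triangle_ineq)
    then have "(cmod (x k + y k))\<^sup>2 \<le> (cmod (x k) + cmod (y k))\<^sup>2" by (simp add: power_mono)
    also have "\<dots> \<le> 2 * (cmod (x k))\<^sup>2 + 2 * (cmod (y k))\<^sup>2"
    proof -
      have "0 \<le> (cmod (x k) - cmod (y k))\<^sup>2" by simp
      then show ?thesis by (simp add: power2_eq_square algebra_simps)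
    qed
    finally show ?thesis by simp
  qed
  ultimately show ?thesis unfolding l2_def mem_Collect_eq by (rule summable_comparison_test'[where N=0])
qed

lemma l2_scale:
  assumes "x \<in> l2" shows "(\<lambda>i. c * x i) \<in> l2"
proof -
  have "summable (\<lambda>k. (cmod c)\<^sup>2 * (cmod (x k))\<^sup>2)"
    using assms by (intro summable_mult) (auto simp: l2_def)
  then show ?thesis unfolding l2_def by (simp add: norm_mult power_mult_distrib)
qed

lemma l2_minus:
  assumes "x \<in> l2" shows "(\<lambda>i. - x i) \<in> l2"
  using l2_scale[OF assms, of "-1"] by simp

lemma l2_diff:
  assumes "x \<in> l2" "y \<in> l2"
  shows "(\<lambda>i. x i - y i) \<in> l2"
  using l2_add[OF assms(1) l2_minus[OF assms(2)]] by simp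

lemma l2_sum:
  assumes "\<And>k. k \<in> I \<Longrightarrow> w k \<in> l2"
  shows "(\<lambda>m. \<Sum>k\<in>I. c k * w k m) \<in> l2"
  using assms
proof (induction I rule: infinite_finite_induct)
  case (insert a F)
  have "(\<lambda>m. c a * w a m + (\<Sum>k\<in>F. c k * w k m)) \<in> l2"
    using insert by (intro l2_add l2_scale) auto
  then show ?case using insert by simp
qed auto

lemma l2_finite_support:
  assumes "\<And>k. k \<ge> N \<Longrightarrow> x k = 0"
  shows "x \<in> l2"
proof -
  have "summable (\<lambda>k. (cmod (x k))\<^sup>2)"
    by (rule summable_finite[of "{..<N}"]) (auto simp: assms not_less)
  then show ?thesis by (simp add: l2_def)
qed

lemma l2_basis_vec[simp]: "basis_vec i \<in> l2" by (rule l2_finite_support[of "Suc i"]) auto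

lemma summable_l2_norm_mult:
  assumes "x \<in> l2" "y \<in> l2"
  shows "summable (\<lambda>k. cmod (x k) * cmod (y k))"
proof -
  have "summable (\<lambda>k. ((cmod (x k))\<^sup>2 + (cmod (y k))\<^sup>2) / 2)"
    using assms by (intro summable_divide summable_add) (auto simp: l2_def)
  moreover have "norm (cmod (x k) * cmod (y k)) \<le> ((cmod (x k))\<^sup>2 + (cmod (y k))\<^sup>2) / 2" for k
  proof -
    have "0 \<le> (cmod (x k) - cmod (y k))\<^sup>2" by simp
    then show ?thesis by (simp add: abs_mult power2_eq_square algebra_simps)
  qed
  ultimately show ?thesis by (rule summable_comparison_test'[where N=0])
qed

lemma summable_l2inner:
  assumes "x \<in> l2" "y \<in> l2"
  shows "summable (\<lambda>k. x k * cnj (y k))"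
proof -
  have "summable (\<lambda>k. norm (x k * cnj (y k)))" using summable_l2_norm_mult[OF assms] by (simp add: norm_mult)
  then show ?thesis by (rule summable_norm_cancel)
qed

lemma l2inner_add_left:
  assumes "x \<in> l2" "y \<in> l2" "z \<in> l2"
  shows "l2inner (\<lambda>i. x i + y i) z = l2inner x z + l2inner y z"
  unfolding l2inner_def using summable_l2inner[OF assms(1,3)] summable_l2inner[OF assms(2,3)]
  by (simp add: distrib_right suminf_add)

lemma l2inner_scale_left:
  assumes "x \<in> l2" "z \<in> l2"
  shows "l2inner (\<lambda>i. c * x i) z = c * l2inner x z"
  unfolding l2inner_def using summable_l2inner[OF assms] by (simp add: mult.assoc suminf_mult)

lemma l2inner_commute:
  assumes "x \<in> l2" "y \<in> l2"
  shows "l2inner y x = cnj (l2inner x y)"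
proof -
  have "(\<lambda>k. x k * cnj (y k)) sums l2inner x y"
    using summable_l2inner[OF assms] unfolding l2inner_def by (simp add: summable_sums)
  then have "(\<lambda>k. cnj (x k * cnj (y k))) sums cnj (l2inner x y)" by (simp only: sums_cnj)
  then have "(\<lambda>k. y k * cnj (x k)) sums cnj (l2inner x y)" by (simp add: mult.commute)
  then show ?thesis unfolding l2inner_def by (simp add: sums_unique[symmetric])
qed

lemma l2inner_add_right:
  assumes "x \<in> l2" "y \<in> l2" "z \<in> l2"
  shows "l2inner z (\<lambda>i. x i + y i) = l2inner z x + l2inner z y"
  using assms by (simp add: l2inner_commute[of _ z] l2inner_add_left l2_add)

lemma l2inner_scale_right:
  assumes "x \<in> l2" "z \<in> l2"
  shows "l2inner z (\<lambda>i. c * x i) = cnj c * l2inner z x"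
  using assms by (simp add: l2inner_commute[of _ z] l2inner_scale_left l2_scale)

lemma l2inner_diff_left:
  assumes "x \<in> l2" "y \<in> l2" "z \<in> l2"
  shows "l2inner (\<lambda>i. x i - y i) z = l2inner x z - l2inner y z"
  using l2inner_add_left[OF assms(1) l2_minus[OF assms(2)] assms(3)]
    l2inner_scale_left[OF assms(2,3), of "-1"] by simp

lemma l2inner_diff_right:
  assumes "x \<in> l2" "y \<in> l2" "z \<in> l2"
  shows "l2inner z (\<lambda>i. x i - y i) = l2inner z x - l2inner z y"
  using assms by (simp add: l2inner_commute[of _ z] l2inner_diff_left l2_diff)

lemma l2inner_lincomb_left:
  assumes "x1 \<in> l2" "x2 \<in> l2" "z \<in> l2"
  shows "l2inner (\<lambda>i. a * x1 i + b * x2 i) z = a * l2inner x1 z + b * l2inner x2 z"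
  using assms by (simp add: l2inner_add_left l2_scale l2inner_scale_left)

lemma l2inner_lincomb_right:
  assumes "x1 \<in> l2" "x2 \<in> l2" "z \<in> l2"
  shows "l2inner z (\<lambda>i. a * x1 i + b * x2 i) = cnj a * l2inner z x1 + cnj b * l2inner z x2"
  using assms by (simp add: l2inner_add_right l2_scale l2inner_scale_right)

lemma l2_lincomb: "x1 \<in> l2 \<Longrightarrow> x2 \<in> l2 \<Longrightarrow> (\<lambda>i. a * x1 i + b * x2 i) \<in> l2"
  by (intro l2_add l2_scale)

lemma l2inner_sum_left:
  assumes "\<And>k. k \<in> I \<Longrightarrow> w k \<in> l2" "y \<in> l2"
  shows "l2inner (\<lambda>m. \<Sum>k\<in>I. c k * w k m) y = (\<Sum>k\<in>I. c k * l2inner (w k) y)"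
  using assms
proof (induction I rule: infinite_finite_induct)
  case (infinite A) then show ?case by (simp add: l2inner_def)
next
  case empty then show ?case by (simp add: l2inner_def)
next
  case (insert a F)
  have "l2inner (\<lambda>m. \<Sum>k\<in>insert a F. c k * w k m) y
      = l2inner (\<lambda>m. c a * w a m + (\<Sum>k\<in>F. c k * w k m)) y" using insert by simp
  also have "\<dots> = c a * l2inner (w a) y + l2inner (\<lambda>m. \<Sum>k\<in>F. c k * w k m) y"
    using insert by (simp add: l2inner_add_left[OF l2_scale l2_sum] l2inner_scale_left)
  finally show ?case using insert by simp
qed

lemma l2inner_sum_right:
  assumes "\<And>k. k \<in> I \<Longrightarrow> w k \<in> l2" "y \<in> l2"
  shows "l2inner y (\<lambda>m. \<Sum>k\<in>I. c k * w k m) = (\<Sum>k\<in>I. cnj (c k) * l2inner y (w k))"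
  using assms by (simp add: l2inner_commute[of _ y] l2inner_sum_left l2_sum)

lemma l2norm_nonneg:
  assumes "x \<in> l2" shows "0 \<le> l2norm x"
proof -
  have "0 \<le> (\<Sum>k. (cmod (x k))\<^sup>2)"
    by (rule suminf_nonneg) (use assms in \<open>auto simp: l2_def\<close>)
  then show ?thesis unfolding l2norm_def by simp
qed

lemma l2norm_zero[simp]: "l2norm (\<lambda>_. 0) = 0"
  by (simp add: l2norm_def)

lemma l2norm_power2:
  assumes "x \<in> l2"
  shows "(l2norm x)\<^sup>2 = (\<Sum>k. (cmod (x k))\<^sup>2)"
proof -
  have "0 \<le> (\<Sum>k. (cmod (x k))\<^sup>2)"
    by (rule suminf_nonneg) (use assms in \<open>auto simp: l2_def\<close>)
  then show ?thesis unfolding l2norm_def by simp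
qed

lemma l2inner_self:
  assumes "x \<in> l2"
  shows "l2inner x x = complex_of_real ((l2norm x)\<^sup>2)"
proof -
  have "(\<lambda>k. x k * cnj (x k)) = (\<lambda>k. complex_of_real ((cmod (x k))\<^sup>2))"
    using complex_norm_square by (intro ext) metis
  moreover have "summable (\<lambda>k. (cmod (x k))\<^sup>2)" using assms by (simp add: l2_def)
  ultimately show ?thesis unfolding l2inner_def l2norm_power2[OF assms]
    by (simp add: suminf_of_real)
qed

lemma l2inner_basis_vec_right: "l2inner x (basis_vec i) = x i"
proof -
  have "(\<lambda>k. x k * cnj (if k = i then 1 else 0)) = (\<lambda>k. if k = i then x k else 0)" by auto
  then show ?thesis unfolding l2inner_def using sums_single[of i x] by (simp add: sums_iff)
qed

lemma l2inner_basis_vec_left: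
  assumes "x \<in> l2"
  shows "l2inner (basis_vec i) x = cnj (x i)"
  using l2inner_commute[OF assms l2_basis_vec, of i] by (simp add: l2inner_basis_vec_right)

lemma L2_set_le_l2norm:
  assumes "x \<in> l2"
  shows "L2_set (\<lambda>k. cmod (x k)) {..<n} \<le> l2norm x"
  unfolding L2_set_def l2norm_def
  by (rule real_sqrt_le_mono, rule sum_le_suminf) (use assms in \<open>auto simp: l2_def\<close>)

lemma cauchy_schwarz_suminf:
  assumes "summable (\<lambda>k. (a k)\<^sup>2)" "summable (\<lambda>k. (b k)\<^sup>2)"
  and "\<And>k. 0 \<le> a k" "\<And>k. 0 \<le> b k"
  shows "summable (\<lambda>k. a k * b k)"
    and "(\<Sum>k. a k * b k) \<le> sqrt (\<Sum>k. (a k)\<^sup>2) * sqrt (\<Sum>k. (b k)\<^sup>2)"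
proof -
  have b: "(\<Sum>k<n. a k * b k) \<le> sqrt (\<Sum>k. (a k)\<^sup>2) * sqrt (\<Sum>k. (b k)\<^sup>2)" for n
  proof -
    have "(\<Sum>k<n. a k * b k) \<le> L2_set a {..<n} * L2_set b {..<n}"
      using L2_set_mult_ineq[of a b "{..<n}"] assms by simp
    also have "\<dots> \<le> sqrt (\<Sum>k. (a k)\<^sup>2) * sqrt (\<Sum>k. (b k)\<^sup>2)"
      unfolding L2_set_def
      by (intro mult_mono real_sqrt_le_mono sum_le_suminf) (use assms in \<open>auto intro: suminf_nonneg sum_nonneg\<close>)
    finally show ?thesis .
  qed
  show "summable (\<lambda>k. a k * b k)" by (rule summableI_nonneg_bounded[OF _ b]) (simp add: assms)
  then show "(\<Sum>k. a k * b k) \<le> sqrt (\<Sum>k. (a k)\<^sup>2) * sqrt (\<Sum>k. (b k)\<^sup>2)"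
    by (rule suminf_le_const[OF _ b])
qed

lemma l2_cauchy_schwarz:
  assumes "x \<in> l2" "y \<in> l2"
  shows "cmod (l2inner x y) \<le> l2norm x * l2norm y"
proof -
  have "cmod (l2inner x y) \<le> (\<Sum>k. cmod (x k * cnj (y k)))"
    unfolding l2inner_def
    by (rule summable_norm) (use summable_l2_norm_mult[OF assms] in \<open>simp add: norm_mult\<close>)
  also have "\<dots> = (\<Sum>k. cmod (x k) * cmod (y k))" by (simp add: norm_mult)
  also have "\<dots> \<le> l2norm x * l2norm y"
    using cauchy_schwarz_suminf(2)[of "\<lambda>k. cmod (x k)" "\<lambda>k. cmod (y k)"] assms
    by (simp add: l2_def l2norm_def)
  finally show ?thesis .
qed

lemma l2norm_triangle:
  assumes "x \<in> l2" "y \<in> l2"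
  shows "l2norm (\<lambda>i. x i + y i) \<le> l2norm x + l2norm y"
proof -
  have b: "(\<Sum>k<n. (cmod (x k + y k))\<^sup>2) \<le> (l2norm x + l2norm y)\<^sup>2" for n
  proof -
    have "L2_set (\<lambda>k. cmod (x k + y k)) {..<n} \<le> L2_set (\<lambda>k. cmod (x k) + cmod (y k)) {..<n}"
      by (rule L2_set_mono) (auto intro: norm_triangle_ineq)
    also have "\<dots> \<le> L2_set (\<lambda>k. cmod (x k)) {..<n} + L2_set (\<lambda>k. cmod (y k)) {..<n}"
      by (rule L2_set_triangle_ineq)
    also have "\<dots> \<le> l2norm x + l2norm y"
      using L2_set_le_l2norm[OF assms(1), of n] L2_set_le_l2norm[OF assms(2), of n] by linarith
    finally have "sqrt (\<Sum>k<n. (cmod (x k + y k))\<^sup>2) \<le> l2norm x + l2norm y" by (simp add: L2_set_def)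
    moreover have "0 \<le> (\<Sum>k<n. (cmod (x k + y k))\<^sup>2)" by (rule sum_nonneg) simp
    ultimately have "(sqrt (\<Sum>k<n. (cmod (x k + y k))\<^sup>2))\<^sup>2 \<le> (l2norm x + l2norm y)\<^sup>2"
      by (intro power_mono) auto
    then show ?thesis using \<open>0 \<le> (\<Sum>k<n. (cmod (x k + y k))\<^sup>2)\<close> by simp
  qed
  have "(\<Sum>k. (cmod (x k + y k))\<^sup>2) \<le> (l2norm x + l2norm y)\<^sup>2"
    by (rule suminf_le_const[OF _ b]) (use l2_add[OF assms] in \<open>simp add: l2_def\<close>)
  then have "sqrt (\<Sum>k. (cmod (x k + y k))\<^sup>2) \<le> sqrt ((l2norm x + l2norm y)\<^sup>2)"
    by (rule real_sqrt_le_mono)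
  then show ?thesis using l2norm_nonneg[OF assms(1)] l2norm_nonneg[OF assms(2)] by (simp add: l2norm_def)
qed

lemma l2norm_scale:
  assumes "x \<in> l2"
  shows "l2norm (\<lambda>i. c * x i) = cmod c * l2norm x"
proof -
  have "(\<Sum>k. (cmod (c * x k))\<^sup>2) = (cmod c)\<^sup>2 * (\<Sum>k. (cmod (x k))\<^sup>2)"
    using assms by (simp add: norm_mult power_mult_distrib suminf_mult l2_def)
  then show ?thesis by (simp add: l2norm_def real_sqrt_mult)
qed

lemma l2norm_zero_iff:
  assumes "x \<in> l2"
  shows "l2norm x = 0 \<longleftrightarrow> x = (\<lambda>_. 0)"
proof
  assume "l2norm x = 0"
  then have "(\<Sum>k. (cmod (x k))\<^sup>2) = 0" using l2norm_power2[OF assms] by simp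
  then have "\<forall>k. (cmod (x k))\<^sup>2 = 0" using assms by (subst (asm) suminf_eq_zero_iff) (auto simp: l2_def)
  then show "x = (\<lambda>_. 0)" by auto
qed (simp add: l2norm_def)

lemma l2norm_diff_triangle:
  assumes "x \<in> l2" "y \<in> l2" "z \<in> l2"
  shows "l2norm (\<lambda>i. x i - z i) \<le> l2norm (\<lambda>i. x i - y i) + l2norm (\<lambda>i. y i - z i)"
  using l2norm_triangle[OF l2_diff[OF assms(1,2)] l2_diff[OF assms(2,3)]] by simp

section \<open>Orthonormal families and Bessel's inequality\<close>

definition orthonormal_on :: "(nat \<Rightarrow> vec) \<Rightarrow> nat set \<Rightarrow> bool" where
  "orthonormal_on w I \<longleftrightarrow>
     (\<forall>k\<in>I. w k \<in> l2) \<and> (\<forall>a\<in>I. \<forall>b\<in>I. l2inner (w a) (w b) = (if a = b then 1 else 0))"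

definition proj_on :: "(nat \<Rightarrow> vec) \<Rightarrow> nat set \<Rightarrow> vec \<Rightarrow> vec" where
  "proj_on w I x = (\<lambda>m. \<Sum>k\<in>I. l2inner x (w k) * w k m)"

lemma orthonormal_on_l2: "orthonormal_on w I \<Longrightarrow> k \<in> I \<Longrightarrow> w k \<in> l2"
  by (simp add: orthonormal_on_def)

lemma proj_on_l2: "orthonormal_on w I \<Longrightarrow> proj_on w I x \<in> l2"
  unfolding proj_on_def by (rule l2_sum) (auto simp: orthonormal_on_def)

lemma sum_delta_mult: "finite I \<Longrightarrow> a \<in> I \<Longrightarrow> (\<Sum>k\<in>I. f k * (if k = a then 1 else 0)) = (f a :: complex)"
  by (simp add: if_distrib cong: if_cong)

lemma l2inner_proj_on:
  assumes "finite I" "orthonormal_on w I" "a \<in> I" "x \<in> l2"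
  shows "l2inner (proj_on w I x) (w a) = l2inner x (w a)"
proof -
  have "l2inner (proj_on w I x) (w a) = (\<Sum>k\<in>I. l2inner x (w k) * l2inner (w k) (w a))"
    unfolding proj_on_def using assms by (intro l2inner_sum_left) (auto simp: orthonormal_on_def)
  also have "\<dots> = (\<Sum>k\<in>I. l2inner x (w k) * (if k = a then 1 else 0))"
    using assms by (intro sum.cong) (auto simp: orthonormal_on_def)
  also have "\<dots> = l2inner x (w a)" using assms by (simp add: sum_delta_mult)
  finally show ?thesis .
qed

lemma l2inner_proj_on_residual:
  assumes "finite I" "orthonormal_on w I" "a \<in> I" "x \<in> l2"
  shows "l2inner (\<lambda>i. x i - proj_on w I x i) (w a) = 0"
  using assms by (simp add: l2inner_diff_left proj_on_l2 orthonormal_on_l2 l2inner_proj_on)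

lemma l2norm_proj_on_residual:
  assumes "finite I" "orthonormal_on w I" "x \<in> l2"
  shows "(l2norm (\<lambda>i. x i - proj_on w I x i))\<^sup>2 = (l2norm x)\<^sup>2 - (\<Sum>k\<in>I. (cmod (l2inner x (w k)))\<^sup>2)"
proof -
  let ?P = "proj_on w I x" define rr where "rr = (\<lambda>i. x i - proj_on w I x i)"
  have P: "?P \<in> l2" by (rule proj_on_l2[OF assms(2)])
  have r: "rr \<in> l2" unfolding rr_def by (rule l2_diff[OF assms(3) P])
  have wl: "\<And>k. k \<in> I \<Longrightarrow> w k \<in> l2" using assms(2) by (simp add: orthonormal_on_def)
  have "l2inner ?P rr = (\<Sum>k\<in>I. l2inner x (w k) * l2inner (w k) rr)"
    unfolding proj_on_def by (rule l2inner_sum_left) (use wl r in auto)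
  also have "\<dots> = 0"
  proof (rule sum.neutral, rule ballI)
    fix k assume k: "k \<in> I"
    have "l2inner (w k) rr = cnj (l2inner rr (w k))" using l2inner_commute[OF r wl[OF k]] .
    then show "l2inner x (w k) * l2inner (w k) rr = 0"
      using l2inner_proj_on_residual[OF assms(1,2) k assms(3)] by (simp add: rr_def)
  qed
  finally have Pr: "l2inner ?P rr = 0" .
  have "l2inner x ?P = (\<Sum>k\<in>I. cnj (l2inner x (w k)) * l2inner x (w k))"
    unfolding proj_on_def by (rule l2inner_sum_right) (use wl assms in auto)
  also have "\<dots> = complex_of_real (\<Sum>k\<in>I. (cmod (l2inner x (w k)))\<^sup>2)"
    by (simp add: complex_norm_square mult.commute del: of_real_power)
  finally have xP: "l2inner x ?P = complex_of_real (\<Sum>k\<in>I. (cmod (l2inner x (w k)))\<^sup>2)" .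
  have "l2inner rr rr = l2inner x rr - l2inner ?P rr" using l2inner_diff_left[OF assms(3) P r] by (simp add: rr_def)
  also have "\<dots> = l2inner x rr" using Pr by simp
  also have "\<dots> = l2inner x x - l2inner x ?P"
    using l2inner_diff_right[OF assms(3) P assms(3)] by (simp add: rr_def)
  finally have "complex_of_real ((l2norm rr)\<^sup>2) = complex_of_real ((l2norm x)\<^sup>2 - (\<Sum>k\<in>I. (cmod (l2inner x (w k)))\<^sup>2))"
    using l2inner_self[OF r] l2inner_self[OF assms(3)] xP by simp
  then show ?thesis unfolding rr_def by (simp only: of_real_eq_iff)
qed

lemma l2norm_proj_on:
  assumes "finite I" "orthonormal_on w I" "x \<in> l2"
  shows "(l2norm (proj_on w I x))\<^sup>2 = (\<Sum>k\<in>I. (cmod (l2inner x (w k)))\<^sup>2)"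
proof -
  have wl: "\<And>k. k \<in> I \<Longrightarrow> w k \<in> l2" using assms(2) by (simp add: orthonormal_on_def)
  have P: "proj_on w I x \<in> l2" by (rule proj_on_l2[OF assms(2)])
  have "l2inner (proj_on w I x) (proj_on w I x) = (\<Sum>k\<in>I. cnj (l2inner x (w k)) * l2inner (proj_on w I x) (w k))"
    unfolding proj_on_def[of w I x] by (rule l2inner_sum_right) (use wl P[unfolded proj_on_def] in auto)
  also have "\<dots> = (\<Sum>k\<in>I. cnj (l2inner x (w k)) * l2inner x (w k))"
    by (rule sum.cong) (auto simp: l2inner_proj_on[OF assms(1,2) _ assms(3)])
  also have "\<dots> = complex_of_real (\<Sum>k\<in>I. (cmod (l2inner x (w k)))\<^sup>2)"
    by (simp add: complex_norm_square mult.commute del: of_real_power)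
  finally show ?thesis using l2inner_self[OF P] by (simp only: of_real_eq_iff)
qed

lemma bessel_inequality_finite:
  assumes "finite I" "orthonormal_on w I" "x \<in> l2"
  shows "(\<Sum>k\<in>I. (cmod (l2inner x (w k)))\<^sup>2) \<le> (l2norm x)\<^sup>2"
  using l2norm_proj_on_residual[OF assms] zero_le_power2[of "l2norm (\<lambda>i. x i - proj_on w I x i)"]
  by linarith

lemma orthonormal_seq_imp_orthonormal_on: "orthonormal_seq u \<Longrightarrow> orthonormal_on u I"
  by (simp add: orthonormal_seq_def orthonormal_on_def)

lemma l2norm_eq_1:
  assumes "x \<in> l2" "l2inner x x = 1" shows "l2norm x = 1"
proof -
  have "complex_of_real ((l2norm x)\<^sup>2) = 1" using l2inner_self[OF assms(1)] assms(2) by simp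
  then have "(l2norm x)\<^sup>2 = 1" by (metis of_real_eq_1_iff)
  then show ?thesis using l2norm_nonneg[OF assms(1)] by (simp add: power2_eq_1_iff)
qed

lemma orthonormal_seqD:
  assumes "orthonormal_seq x"
  shows "x k \<in> l2" "l2inner (x k) (x k) = 1" "l2norm (x k) = 1" "j \<noteq> k \<Longrightarrow> l2inner (x j) (x k) = 0"
  using assms l2norm_eq_1[of "x k"] by (auto simp: orthonormal_seq_def)

lemma bessel_inequality:
  assumes "orthonormal_seq u" "x \<in> l2"
  shows "summable (\<lambda>k. (cmod (l2inner x (u k)))\<^sup>2)" "(\<Sum>k. (cmod (l2inner x (u k)))\<^sup>2) \<le> (l2norm x)\<^sup>2"
proof -
  have b: "(\<Sum>k<n. (cmod (l2inner x (u k)))\<^sup>2) \<le> (l2norm x)\<^sup>2" for n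
    by (rule bessel_inequality_finite[OF _ orthonormal_seq_imp_orthonormal_on[OF assms(1)] assms(2)]) simp
  show "summable (\<lambda>k. (cmod (l2inner x (u k)))\<^sup>2)" by (rule summableI_nonneg_bounded[OF _ b]) simp
  then show "(\<Sum>k. (cmod (l2inner x (u k)))\<^sup>2) \<le> (l2norm x)\<^sup>2" by (rule suminf_le_const[OF _ b])
qed

lemma l2inner_orthonormal_seq_right_tendsto_0:
  assumes "orthonormal_seq u" "x \<in> l2"
  shows "(\<lambda>k. l2inner x (u k)) \<longlonglongrightarrow> 0"
proof -
  have "(\<lambda>k. (cmod (l2inner x (u k)))\<^sup>2) \<longlonglongrightarrow> 0"
    by (rule summable_LIMSEQ_zero[OF bessel_inequality(1)[OF assms]])
  then have "(\<lambda>k. sqrt ((cmod (l2inner x (u k)))\<^sup>2)) \<longlonglongrightarrow> sqrt 0"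
    by (intro tendsto_intros)
  then have "(\<lambda>k. cmod (l2inner x (u k))) \<longlonglongrightarrow> 0" by simp
  then show ?thesis by (simp add: tendsto_norm_zero_iff)
qed

lemma l2inner_orthonormal_seq_left_tendsto_0:
  assumes "orthonormal_seq u" "x \<in> l2"
  shows "(\<lambda>k. l2inner (u k) x) \<longlonglongrightarrow> 0"
proof -
  have "(\<lambda>k. cnj (l2inner x (u k))) \<longlonglongrightarrow> cnj 0"
    by (intro tendsto_intros l2inner_orthonormal_seq_right_tendsto_0[OF assms])
  moreover have "l2inner (u k) x = cnj (l2inner x (u k))" for k
    using assms by (intro l2inner_commute) (auto simp: orthonormal_seq_def)
  ultimately show ?thesis by simp
qed

section \<open>Bounded operators\<close>

lemma bounded_op_l2: "bounded_op T \<Longrightarrow> x \<in> l2 \<Longrightarrow> T x \<in> l2"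
  by (simp add: bounded_op_def)

lemma bounded_op_add: "bounded_op T \<Longrightarrow> x \<in> l2 \<Longrightarrow> y \<in> l2 \<Longrightarrow> T (\<lambda>i. x i + y i) = (\<lambda>i. T x i + T y i)"
  by (simp add: bounded_op_def)

lemma bounded_op_scale: "bounded_op T \<Longrightarrow> x \<in> l2 \<Longrightarrow> T (\<lambda>i. c * x i) = (\<lambda>i. c * T x i)"
  by (simp add: bounded_op_def)

lemma bounded_opE:
  assumes "bounded_op T"
  obtains C where "C \<ge> 0" "\<And>x. x \<in> l2 \<Longrightarrow> l2norm (T x) \<le> C * l2norm x"
proof -
  obtain C where C: "\<forall>x\<in>l2. l2norm (T x) \<le> C * l2norm x" using assms by (auto simp: bounded_op_def)
  have "l2norm (T x) \<le> max C 0 * l2norm x" if "x \<in> l2" for x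
    by (rule order_trans[OF C[rule_format, OF that]], rule mult_right_mono) (auto simp: l2norm_nonneg that)
  then show ?thesis using that[of "max C 0"] by auto
qed

lemma bounded_op_zero:
  assumes "bounded_op T"
  shows "T (\<lambda>_. 0) = (\<lambda>_. 0)"
  using bounded_op_scale[OF assms l2_zero, of 0] by simp

lemma bounded_op_minus:
  assumes "bounded_op T" "x \<in> l2"
  shows "T (\<lambda>i. - x i) = (\<lambda>i. - T x i)"
  using bounded_op_scale[OF assms, of "-1"] by simp

lemma bounded_op_diff:
  assumes "bounded_op T" "x \<in> l2" "y \<in> l2"
  shows "T (\<lambda>i. x i - y i) = (\<lambda>i. T x i - T y i)"
  using bounded_op_add[OF assms(1,2) l2_minus[OF assms(3)]] bounded_op_minus[OF assms(1,3)] by simp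

lemma bounded_op_sum:
  assumes "bounded_op T" "\<And>k. k \<in> I \<Longrightarrow> w k \<in> l2"
  shows "T (\<lambda>m. \<Sum>k\<in>I. c k * w k m) = (\<lambda>m. \<Sum>k\<in>I. c k * T (w k) m)"
  using assms(2)
proof (induction I rule: infinite_finite_induct)
  case (infinite A) then show ?case using bounded_op_zero[OF assms(1)] by simp
next
  case empty then show ?case using bounded_op_zero[OF assms(1)] by simp
next
  case (insert a F)
  have "T (\<lambda>m. \<Sum>k\<in>insert a F. c k * w k m) = T (\<lambda>m. c a * w a m + (\<Sum>k\<in>F. c k * w k m))"
    using insert by simp
  also have "\<dots> = (\<lambda>m. c a * T (w a) m + T (\<lambda>m. \<Sum>k\<in>F. c k * w k m) m)"
    using insert by (simp add: bounded_op_add[OF assms(1) l2_scale l2_sum] bounded_op_scale[OF assms(1)])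
  finally show ?case using insert by simp
qed

lemma bounded_op_l2inner_le:
  assumes "x \<in> l2" "y \<in> l2" "\<And>x. x \<in> l2 \<Longrightarrow> l2norm (T x) \<le> C * l2norm x" "bounded_op T"
  shows "cmod (l2inner (T x) y) \<le> C * l2norm x * l2norm y"
proof -
  have "cmod (l2inner (T x) y) \<le> l2norm (T x) * l2norm y"
    by (rule l2_cauchy_schwarz[OF bounded_op_l2[OF assms(4,1)] assms(2)])
  also have "\<dots> \<le> C * l2norm x * l2norm y"
    by (rule mult_right_mono[OF assms(3)[OF assms(1)] l2norm_nonneg[OF assms(2)]])
  finally show ?thesis .
qed

lemma orthonormal_on_basis_vec: "orthonormal_on basis_vec I"
  by (auto simp: orthonormal_on_def l2inner_basis_vec_right)

lemma proj_on_basis_vec: "proj_on basis_vec {..<N} x = (\<lambda>i. if i < N then x i else 0)"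
  unfolding proj_on_def by (auto simp: l2inner_basis_vec_right if_distrib cong: if_cong)

lemma truncation_tendsto:
  assumes "x \<in> l2"
  shows "(\<lambda>N. l2norm (\<lambda>i. x i - (if i < N then x i else 0))) \<longlonglongrightarrow> 0"
proof -
  have eq: "(l2norm (\<lambda>i. x i - (if i < N then x i else 0)))\<^sup>2 = (l2norm x)\<^sup>2 - (\<Sum>k<N. (cmod (x k))\<^sup>2)" for N
    using l2norm_proj_on_residual[OF _ orthonormal_on_basis_vec assms, of "{..<N}"]
      by (simp add: proj_on_basis_vec l2inner_basis_vec_right)
  have "(\<lambda>N. (l2norm x)\<^sup>2 - (\<Sum>k<N. (cmod (x k))\<^sup>2)) \<longlonglongrightarrow> (l2norm x)\<^sup>2 - (\<Sum>k. (cmod (x k))\<^sup>2)"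
    using assms by (intro tendsto_intros summable_LIMSEQ) (simp add: l2_def)
  then have "(\<lambda>N. (l2norm (\<lambda>i. x i - (if i < N then x i else 0)))\<^sup>2) \<longlonglongrightarrow> 0"
    by (simp add: eq l2norm_power2[OF assms])
  then have "(\<lambda>N. sqrt ((l2norm (\<lambda>i. x i - (if i < N then x i else 0)))\<^sup>2)) \<longlonglongrightarrow> sqrt 0"
    by (intro tendsto_intros)
  moreover have "(\<lambda>i. x i - (if i < N then x i else 0)) \<in> l2" for N
    by (rule l2_diff[OF assms l2_finite_support[of N]]) auto
  ultimately show ?thesis using l2norm_nonneg by simp
qed

lemma truncation_eq_sum: "(\<lambda>i. if i < N then x i else 0) = (\<lambda>m. \<Sum>l<N. x l * basis_vec l m)"
  by (auto simp: if_distrib cong: if_cong)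

lemma le_sqrt_mult_imp_le:
  fixes S B :: real
  assumes "0 \<le> S" "0 \<le> B" "S \<le> B * sqrt S"
  shows "S \<le> B\<^sup>2"
proof (cases "S = 0")
  case False
  then have pos: "0 < sqrt S" using assms(1) by simp
  have "sqrt S * sqrt S \<le> sqrt S * B" using assms by (simp add: mult.commute)
  then have "sqrt S \<le> B" using pos by (rule mult_left_le_imp_le)
  then have "(sqrt S)\<^sup>2 \<le> B\<^sup>2" using assms(1) by (intro power_mono) auto
  then show ?thesis using assms(1) by simp
qed (simp add: assms)

lemma l2inner_bounded_op_truncation:
  assumes T: "bounded_op T" and f: "f \<in> l2"
  shows "l2inner (T (\<lambda>i. if i < N then x i else 0)) f = (\<Sum>l<N. x l * l2inner (T (basis_vec l)) f)"
proof -
  have "l2inner (T (\<lambda>i. if i < N then x i else 0)) f = l2inner (\<lambda>m. \<Sum>l<N. x l * T (basis_vec l) m) f"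
    by (simp only: truncation_eq_sum bounded_op_sum[OF T l2_basis_vec])
  also have "\<dots> = (\<Sum>l<N. x l * l2inner (T (basis_vec l)) f)"
    by (rule l2inner_sum_left) (auto intro: bounded_op_l2[OF T] f)
  finally show ?thesis .
qed

lemma bounded_op_adjoint_coeffs_l2:
  assumes T: "bounded_op T" and f: "f \<in> l2"
  shows "(\<lambda>l. cnj (l2inner (T (basis_vec l)) f)) \<in> l2"
proof -
  obtain C where C0: "C \<ge> 0" and C: "\<And>x. x \<in> l2 \<Longrightarrow> l2norm (T x) \<le> C * l2norm x"
    using bounded_opE[OF T] by blast
  define z where "z = (\<lambda>l. cnj (l2inner (T (basis_vec l)) f))"
  have "(\<Sum>l<N. (cmod (z l))\<^sup>2) \<le> (C * l2norm f)\<^sup>2" for N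
  proof -
    define t where "t = (\<lambda>i. if i < N then z i else 0)"
    have tl2: "t \<in> l2" unfolding t_def by (rule l2_finite_support[of N]) auto
    define S where "S = (\<Sum>l<N. (cmod (z l))\<^sup>2)"
    have S0: "S \<ge> 0" unfolding S_def by (rule sum_nonneg) simp
    have "(l2norm t)\<^sup>2 = (\<Sum>k<N. (cmod (t k))\<^sup>2)"
      using l2norm_power2[OF tl2] suminf_finite[of "{..<N}" "\<lambda>k. (cmod (t k))\<^sup>2"] by (simp add: t_def)
    then have tn: "l2norm t = sqrt S" using l2norm_nonneg[OF tl2] by (simp add: S_def t_def real_sqrt_unique)
    have "complex_of_real S = (\<Sum>l<N. z l * cnj (z l))"
      unfolding S_def by (simp add: complex_norm_square del: of_real_power)
    also have "\<dots> = l2inner (T t) f" unfolding t_def l2inner_bounded_op_truncation[OF T f] by (simp add: z_def)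
    finally have "S = cmod (l2inner (T t) f)" using S0 by (metis abs_of_nonneg norm_of_real)
    also have "\<dots> \<le> C * l2norm t * l2norm f" by (rule bounded_op_l2inner_le[OF tl2 f C T])
    finally have "S \<le> (C * l2norm f) * sqrt S" by (simp add: tn algebra_simps)
    then have "S \<le> (C * l2norm f)\<^sup>2"
      by (rule le_sqrt_mult_imp_le[OF S0, rotated]) (simp add: C0 l2norm_nonneg f)
    then show ?thesis by (simp add: S_def)
  qed
  then have "summable (\<lambda>l. (cmod (z l))\<^sup>2)" by (rule summableI_nonneg_bounded[rotated]) simp
  then show ?thesis by (simp add: l2_def z_def)
qed

lemma bounded_op_adjoint_exists:
  assumes T: "bounded_op T" and f: "f \<in> l2"
  shows "\<exists>z\<in>l2. \<forall>x\<in>l2. l2inner (T x) f = l2inner x z"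
proof (intro bexI ballI)
  obtain C where C: "\<And>x. x \<in> l2 \<Longrightarrow> l2norm (T x) \<le> C * l2norm x"
    using bounded_opE[OF T] by blast
  define z where "z = (\<lambda>l. cnj (l2inner (T (basis_vec l)) f))"
  show "z \<in> l2" unfolding z_def by (rule bounded_op_adjoint_coeffs_l2[OF T f])
  fix x assume x: "x \<in> l2"
  define t where "t = (\<lambda>N. (\<lambda>i. if i < N then x i else 0))"
  have tl2: "t N \<in> l2" for N unfolding t_def by (rule l2_finite_support[of N]) auto
  define g where "g = (\<lambda>N. C * l2norm (\<lambda>i. x i - t N i) * l2norm f)"
  have g_bound: "cmod (l2inner (T x) f - l2inner (T (t N)) f) \<le> g N" for N
    using bounded_op_l2inner_le[OF l2_diff[OF x tl2] f C T] unfolding g_def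
    by (simp add: bounded_op_diff[OF T x tl2] l2inner_diff_left[OF bounded_op_l2[OF T x] bounded_op_l2[OF T tl2] f])
  have "g \<longlonglongrightarrow> C * 0 * l2norm f"
    unfolding g_def t_def by (intro tendsto_intros truncation_tendsto[OF x])
  then have "g \<longlonglongrightarrow> 0" by simp
  then have "(\<lambda>N. l2inner (T x) f - l2inner (T (t N)) f) \<longlonglongrightarrow> 0"
    by (rule Lim_null_comparison[OF always_eventually, rotated]) (simp add: g_bound)
  then have "(\<lambda>N. l2inner (T x) f - (l2inner (T x) f - l2inner (T (t N)) f)) \<longlonglongrightarrow> l2inner (T x) f - 0"
    by (intro tendsto_intros)
  then have "(\<lambda>N. \<Sum>l<N. x l * cnj (z l)) \<longlonglongrightarrow> l2inner (T x) f"
    by (simp add: t_def z_def l2inner_bounded_op_truncation[OF T f])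
  then have "(\<lambda>l. x l * cnj (z l)) sums l2inner (T x) f" by (simp add: sums_def)
  then show "l2inner (T x) f = l2inner x z" unfolding l2inner_def[of x z] by (rule sums_unique)
qed

lemma bounded_op_orthonormal_seq_weakly_null:
  assumes T: "bounded_op T" and u: "orthonormal_seq u" and f: "f \<in> l2"
  shows "(\<lambda>k. l2inner (T (u k)) f) \<longlonglongrightarrow> 0"
proof -
  obtain z where z: "z \<in> l2" "\<And>x. x \<in> l2 \<Longrightarrow> l2inner (T x) f = l2inner x z"
    using bounded_op_adjoint_exists[OF T f] by blast
  have "u k \<in> l2" for k using u by (simp add: orthonormal_seq_def)
  then show ?thesis using l2inner_orthonormal_seq_left_tendsto_0[OF u z(1)] z(2) by simp
qed

lemma bounded_op_tuple_uniform_bound: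
  fixes T :: "'n::finite \<Rightarrow> op"
  assumes "\<forall>j. bounded_op (T j)"
  shows "\<exists>C\<ge>0. \<forall>j. \<forall>x\<in>l2. l2norm (T j x) \<le> C * l2norm x"
proof -
  have "\<forall>j. \<exists>C. C \<ge> 0 \<and> (\<forall>x\<in>l2. l2norm (T j x) \<le> C * l2norm x)"
    using assms bounded_opE by metis
  then obtain Cf where Cf: "\<And>j. Cf j \<ge> 0" "\<And>j x. x \<in> l2 \<Longrightarrow> l2norm (T j x) \<le> Cf j * l2norm x"
    by metis
  define C where "C = (\<Sum>j\<in>UNIV. Cf j)"
  have "Cf j \<le> C" for j unfolding C_def by (rule member_le_sum) (auto intro: Cf)
  then have "l2norm (T j x) \<le> C * l2norm x" if "x \<in> l2" for j x
    using Cf(2)[OF that, of j] l2norm_nonneg[OF that] by (meson mult_right_mono order_trans)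
  moreover have "C \<ge> 0" unfolding C_def by (rule sum_nonneg) (auto intro: Cf)
  ultimately show ?thesis by blast
qed

section \<open>The essential numerical range\<close>

lemma l2inner_diag_le:
  assumes "bounded_op T" "\<And>x. x \<in> l2 \<Longrightarrow> l2norm (T x) \<le> C * l2norm x" "x \<in> l2" "l2inner x x = 1"
  shows "cmod (l2inner (T x) x) \<le> C"
  using bounded_op_l2inner_le[OF assms(3,3) assms(2,1)] l2norm_eq_1[OF assms(3,4)] by simp

lemma ess_num_range_bound:
  fixes T :: "'n::finite \<Rightarrow> op"
  assumes T: "\<forall>j. bounded_op (T j)" and C: "\<forall>j. \<forall>x\<in>l2. l2norm (T j x) \<le> C * l2norm x"
    and mu: "\<mu> \<in> ess_num_range T"
  shows "cmod (\<mu> j) \<le> C"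
proof -
  obtain x where x: "orthonormal_seq x" "\<And>j. (\<lambda>k. l2inner (T j (x k)) (x k)) \<longlonglongrightarrow> \<mu> j"
    using mu by (auto simp: ess_num_range_def)
  have "(\<lambda>k. cmod (l2inner (T j (x k)) (x k))) \<longlonglongrightarrow> cmod (\<mu> j)"
    by (intro tendsto_intros x(2))
  moreover have "cmod (l2inner (T j (x k)) (x k)) \<le> C" for k
    using l2inner_diag_le[of "T j" C "x k"] T C orthonormal_seqD[OF x(1)] by auto
  ultimately show ?thesis by (intro tendsto_le[OF _ tendsto_const]) auto
qed

lemma orthonormal_seq_basis_vec: "orthonormal_seq basis_vec"
  by (simp add: orthonormal_seq_def l2inner_basis_vec_right)

lemma ess_num_range_nonempty:
  fixes T :: "'n::finite \<Rightarrow> op"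
  assumes T: "\<forall>j. bounded_op (T j)" shows "ess_num_range T \<noteq> {}"
proof -
  obtain C where C: "C \<ge> 0" "\<forall>j. \<forall>x\<in>l2. l2norm (T j x) \<le> C * l2norm x"
    using bounded_op_tuple_uniform_bound[OF T] by blast
  define a where "a = (\<lambda>k. \<chi> j. l2inner (T j (basis_vec k)) (basis_vec k))"
  have "norm (a k) \<le> of_nat CARD('n) * C" for k
  proof -
    have "norm (a k) \<le> (\<Sum>j\<in>UNIV. norm (a k $ j))" by (simp add: norm_vec_def L2_set_le_sum)
    also have "\<dots> \<le> (\<Sum>j\<in>(UNIV::'n set). C)"
      by (rule sum_mono) (use l2inner_diag_le[of _ C "basis_vec k"] T C orthonormal_seqD[OF orthonormal_seq_basis_vec] in \<open>auto simp: a_def\<close>)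
    finally show ?thesis by simp
  qed
  then have "bounded (range a)" by (auto simp: bounded_iff)
  then obtain l r where lr: "strict_mono r" "(a \<circ> r) \<longlonglongrightarrow> l"
    using bounded_imp_convergent_subsequence by blast
  have "orthonormal_seq (\<lambda>k. basis_vec (r k))"
    using lr(1) by (auto simp: orthonormal_seq_def l2inner_basis_vec_right strict_mono_eq)
  moreover have "(\<lambda>k. l2inner (T j (basis_vec (r k))) (basis_vec (r k))) \<longlonglongrightarrow> l $ j" for j
  proof -
    have "(\<lambda>k. (a \<circ> r) k $ j) \<longlonglongrightarrow> l $ j" by (intro tendsto_intros lr(2))
    then show ?thesis by (simp add: a_def o_def)
  qed
  ultimately have "(\<lambda>j. l $ j) \<in> ess_num_range T" unfolding ess_num_range_def by blast
  then show ?thesis by blast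
qed

lemma l2inner_diag_perturb:
  assumes T: "bounded_op T" "\<And>x. x \<in> l2 \<Longrightarrow> l2norm (T x) \<le> C * l2norm x"
    and xy: "x \<in> l2" "y \<in> l2"
  shows "cmod (l2inner (T y) y - l2inner (T x) x)
           \<le> C * l2norm (\<lambda>i. y i - x i) * l2norm y + C * l2norm x * l2norm (\<lambda>i. y i - x i)"
proof -
  have d: "(\<lambda>i. y i - x i) \<in> l2" by (rule l2_diff[OF xy(2,1)])
  have "l2inner (T y) y - l2inner (T x) x = l2inner (T (\<lambda>i. y i - x i)) y + l2inner (T x) (\<lambda>i. y i - x i)"
    by (simp add: bounded_op_diff[OF T(1) xy(2,1)]
        l2inner_diff_left[OF bounded_op_l2[OF T(1) xy(2)] bounded_op_l2[OF T(1) xy(1)] xy(2)]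
        l2inner_diff_right[OF xy(2,1) bounded_op_l2[OF T(1) xy(1)]])
  also have "cmod \<dots> \<le> cmod (l2inner (T (\<lambda>i. y i - x i)) y) + cmod (l2inner (T x) (\<lambda>i. y i - x i))"
    by (rule norm_triangle_ineq)
  also have "\<dots> \<le> C * l2norm (\<lambda>i. y i - x i) * l2norm y + C * l2norm x * l2norm (\<lambda>i. y i - x i)"
    by (intro add_mono bounded_op_l2inner_le[OF _ _ T(2,1)] d xy)
  finally show ?thesis .
qed

lemma l2inner_cross_perturb:
  assumes T: "bounded_op T" "\<And>x. x \<in> l2 \<Longrightarrow> l2norm (T x) \<le> C * l2norm x"
    and xy: "x \<in> l2" "y \<in> l2" and r: "r \<in> l2"
  shows "cmod (l2inner (T y) r - l2inner (T x) r) \<le> C * l2norm (\<lambda>i. y i - x i) * l2norm r"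
    and "cmod (l2inner (T r) y - l2inner (T r) x) \<le> C * l2norm r * l2norm (\<lambda>i. y i - x i)"
proof -
  have d: "(\<lambda>i. y i - x i) \<in> l2" by (rule l2_diff[OF xy(2,1)])
  have "l2inner (T y) r - l2inner (T x) r = l2inner (T (\<lambda>i. y i - x i)) r"
    by (simp add: bounded_op_diff[OF T(1) xy(2,1)]
        l2inner_diff_left[OF bounded_op_l2[OF T(1) xy(2)] bounded_op_l2[OF T(1) xy(1)] r])
  then show "cmod (l2inner (T y) r - l2inner (T x) r) \<le> C * l2norm (\<lambda>i. y i - x i) * l2norm r"
    using bounded_op_l2inner_le[OF d r T(2,1)] by simp
  have "l2inner (T r) y - l2inner (T r) x = l2inner (T r) (\<lambda>i. y i - x i)"
    by (simp add: l2inner_diff_right[OF xy(2,1) bounded_op_l2[OF T(1) r]])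
  then show "cmod (l2inner (T r) y - l2inner (T r) x) \<le> C * l2norm r * l2norm (\<lambda>i. y i - x i)"
    using bounded_op_l2inner_le[OF r d T(2,1)] by simp
qed

lemma l2inner_perturb_tendsto:
  assumes T: "bounded_op T"
    and x: "\<And>k. x k \<in> l2" "\<And>k. l2norm (x k) = 1" and y: "\<And>k. y k \<in> l2"
    and xy: "(\<lambda>k. l2norm (\<lambda>i. y k i - x k i)) \<longlonglongrightarrow> 0" and r: "r \<in> l2"
  shows "(\<lambda>k. l2inner (T (y k)) (y k) - l2inner (T (x k)) (x k)) \<longlonglongrightarrow> 0"
    and "(\<lambda>k. l2inner (T (y k)) r - l2inner (T (x k)) r) \<longlonglongrightarrow> 0"
    and "(\<lambda>k. l2inner (T r) (y k) - l2inner (T r) (x k)) \<longlonglongrightarrow> 0"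
proof -
  obtain C where C0: "C \<ge> 0" and C: "\<And>z. z \<in> l2 \<Longrightarrow> l2norm (T z) \<le> C * l2norm z"
    using bounded_opE[OF T] by blast
  define \<epsilon> where "\<epsilon> = (\<lambda>k. l2norm (\<lambda>i. y k i - x k i))"
  have \<epsilon>0: "\<epsilon> \<longlonglongrightarrow> 0" using xy by (simp add: \<epsilon>_def)
  have \<epsilon>_nonneg: "0 \<le> \<epsilon> k" for k by (simp add: \<epsilon>_def l2norm_nonneg l2_diff x y)
  show "(\<lambda>k. l2inner (T (y k)) (y k) - l2inner (T (x k)) (x k)) \<longlonglongrightarrow> 0"
  proof (rule Lim_null_comparison)
    have "cmod (l2inner (T (y k)) (y k) - l2inner (T (x k)) (x k)) \<le> C * \<epsilon> k * (\<epsilon> k + 1) + C * \<epsilon> k" for k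
    proof -
      have "l2norm (y k) \<le> \<epsilon> k + 1"
        using l2norm_triangle[OF l2_diff[OF y[of k] x(1)[of k]] x(1)[of k]] x(2)[of k] by (simp add: \<epsilon>_def)
      then have "C * \<epsilon> k * l2norm (y k) \<le> C * \<epsilon> k * (\<epsilon> k + 1)"
        by (intro mult_left_mono) (simp_all add: C0 \<epsilon>_nonneg)
      then show ?thesis using l2inner_diag_perturb[OF T C x(1) y, of k k] x(2)[of k] by (simp add: \<epsilon>_def)
    qed
    then show "eventually (\<lambda>k. cmod (l2inner (T (y k)) (y k) - l2inner (T (x k)) (x k))
                 \<le> C * \<epsilon> k * (\<epsilon> k + 1) + C * \<epsilon> k) sequentially" by simp
    have "(\<lambda>k. C * \<epsilon> k * (\<epsilon> k + 1) + C * \<epsilon> k) \<longlonglongrightarrow> C * 0 * (0 + 1) + C * 0"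
      by (intro tendsto_intros \<epsilon>0)
    then show "(\<lambda>k. C * \<epsilon> k * (\<epsilon> k + 1) + C * \<epsilon> k) \<longlonglongrightarrow> 0"
      by simp
  qed
  show "(\<lambda>k. l2inner (T (y k)) r - l2inner (T (x k)) r) \<longlonglongrightarrow> 0"
  proof (rule Lim_null_comparison)
    show "eventually (\<lambda>k. cmod (l2inner (T (y k)) r - l2inner (T (x k)) r) \<le> C * \<epsilon> k * l2norm r) sequentially"
      using l2inner_cross_perturb(1)[OF T C x(1) y r] by (simp add: \<epsilon>_def)
    show "(\<lambda>k. C * \<epsilon> k * l2norm r) \<longlonglongrightarrow> 0"
      using tendsto_mult[OF tendsto_mult[OF tendsto_const \<epsilon>0] tendsto_const, of C "l2norm r"] by simp
  qed
  show "(\<lambda>k. l2inner (T r) (y k) - l2inner (T r) (x k)) \<longlonglongrightarrow> 0"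
  proof (rule Lim_null_comparison)
    show "eventually (\<lambda>k. cmod (l2inner (T r) (y k) - l2inner (T r) (x k)) \<le> C * l2norm r * \<epsilon> k) sequentially"
      using l2inner_cross_perturb(2)[OF T C x(1) y r] by (simp add: \<epsilon>_def)
    show "(\<lambda>k. C * l2norm r * \<epsilon> k) \<longlonglongrightarrow> 0"
      using tendsto_mult[OF tendsto_const \<epsilon>0, of "C * l2norm r"] by simp
  qed
qed

lemma l2_normalized_tendsto:
  assumes v: "\<And>k. v k \<in> l2" and x: "\<And>k. x k \<in> l2"
    and v1: "(\<lambda>k. l2norm (v k)) \<longlonglongrightarrow> 1" and vx: "(\<lambda>k. l2norm (\<lambda>i. v k i - x k i)) \<longlonglongrightarrow> 0"
  defines "y \<equiv> \<lambda>k i. complex_of_real (1 / l2norm (v k)) * v k i"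
  shows "(\<lambda>k. l2norm (\<lambda>i. y k i - x k i)) \<longlonglongrightarrow> 0"
    and "eventually (\<lambda>k. l2norm (y k) = 1) sequentially"
proof -
  define N where "N = (\<lambda>k. l2norm (v k))"
  have yl2: "y k \<in> l2" for k unfolding y_def by (rule l2_scale[OF v])
  have close: "l2norm (\<lambda>i. y k i - x k i) \<le> cmod (complex_of_real (1 / N k) - 1) * N k + l2norm (\<lambda>i. v k i - x k i)" for k
  proof -
    have "l2norm (\<lambda>i. y k i - x k i) \<le> l2norm (\<lambda>i. y k i - v k i) + l2norm (\<lambda>i. v k i - x k i)"
      by (rule l2norm_diff_triangle[OF yl2 v x])
    also have "(\<lambda>i. y k i - v k i) = (\<lambda>i. (complex_of_real (1 / N k) - 1) * v k i)"
      by (simp add: y_def N_def algebra_simps)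
    also have "l2norm \<dots> = cmod (complex_of_real (1 / N k) - 1) * N k" by (simp add: l2norm_scale[OF v] N_def)
    finally show ?thesis .
  qed
  have "(\<lambda>k. cmod (complex_of_real (1 / N k) - 1) * N k + l2norm (\<lambda>i. v k i - x k i))
          \<longlonglongrightarrow> cmod (complex_of_real (1 / 1) - 1) * 1 + 0"
    unfolding N_def by (intro tendsto_intros v1 vx) simp
  then have bound0: "(\<lambda>k. cmod (complex_of_real (1 / N k) - 1) * N k + l2norm (\<lambda>i. v k i - x k i)) \<longlonglongrightarrow> 0"
    by simp
  show "(\<lambda>k. l2norm (\<lambda>i. y k i - x k i)) \<longlonglongrightarrow> 0"
    by (rule real_tendsto_sandwich[OF _ _ tendsto_const bound0])
      (intro always_eventually allI close l2norm_nonneg l2_diff yl2 x)+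
  have "l2norm (y k) = cmod (complex_of_real (1 / N k)) * N k" for k
    unfolding y_def N_def by (rule l2norm_scale[OF v])
  then show "eventually (\<lambda>k. l2norm (y k) = 1) sequentially"
    using order_tendstoD(1)[OF v1 zero_less_one] by (auto elim!: eventually_mono simp: N_def norm_divide)
qed

lemma deflated_orthonormal_seq:
  assumes x: "orthonormal_seq x" and I: "finite I" "orthonormal_on w I"
  obtains y where "\<And>k. y k \<in> l2"
    and "eventually (\<lambda>k. l2inner (y k) (y k) = 1 \<and> (\<forall>a\<in>I. l2inner (y k) (w a) = 0)) sequentially"
    and "(\<lambda>k. l2norm (\<lambda>i. y k i - x k i)) \<longlonglongrightarrow> 0"
proof -
  note xD = orthonormal_seqD[OF x]
  define S where "S = (\<lambda>k. \<Sum>a\<in>I. (cmod (l2inner (x k) (w a)))\<^sup>2)"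
  define v where "v = (\<lambda>k i. x k i - proj_on w I (x k) i)"
  define y where "y = (\<lambda>k i. complex_of_real (1 / l2norm (v k)) * v k i)"
  have wl: "\<And>a. a \<in> I \<Longrightarrow> w a \<in> l2" using I(2) by (simp add: orthonormal_on_def)
  have Pl2: "proj_on w I (x k) \<in> l2" for k by (rule proj_on_l2[OF I(2)])
  have vl2: "v k \<in> l2" for k unfolding v_def by (rule l2_diff[OF xD(1) Pl2])
  have "(\<lambda>k. \<Sum>a\<in>I. (cmod (l2inner (x k) (w a)))\<^sup>2) \<longlonglongrightarrow> (\<Sum>a\<in>I. (cmod (0::complex))\<^sup>2)"
    by (intro tendsto_intros l2inner_orthonormal_seq_left_tendsto_0[OF x] wl)
  then have S0: "S \<longlonglongrightarrow> 0" by (simp add: S_def)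
  have "l2norm (v k) = sqrt (1 - S k)" for k
    using l2norm_proj_on_residual[OF I xD(1), of k] xD(3)[of k] l2norm_nonneg[OF vl2, of k]
    by (intro real_sqrt_unique[symmetric]) (simp_all add: v_def S_def)
  moreover have "(\<lambda>k. sqrt (1 - S k)) \<longlonglongrightarrow> sqrt (1 - 0)" by (intro tendsto_intros S0)
  ultimately have v1: "(\<lambda>k. l2norm (v k)) \<longlonglongrightarrow> 1" by simp
  have "l2norm (\<lambda>i. v k i - x k i) = sqrt (S k)" for k
  proof -
    have "l2norm (\<lambda>i. v k i - x k i) = l2norm (proj_on w I (x k))"
      using l2norm_scale[OF Pl2, of "-1" k] by (simp add: v_def)
    also have "\<dots> = sqrt (S k)"
      using l2norm_proj_on[OF I xD(1), of k] l2norm_nonneg[OF Pl2, of k]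
      by (intro real_sqrt_unique[symmetric]) (simp_all add: S_def)
    finally show ?thesis .
  qed
  moreover have "(\<lambda>k. sqrt (S k)) \<longlonglongrightarrow> sqrt 0" by (intro tendsto_intros S0)
  ultimately have vx: "(\<lambda>k. l2norm (\<lambda>i. v k i - x k i)) \<longlonglongrightarrow> 0" by simp
  have close: "(\<lambda>k. l2norm (\<lambda>i. y k i - x k i)) \<longlonglongrightarrow> 0"
    and unit: "eventually (\<lambda>k. l2norm (y k) = 1) sequentially"
    unfolding y_def by (rule l2_normalized_tendsto[OF vl2 xD(1) v1 vx])+
  have yl2: "y k \<in> l2" for k unfolding y_def by (rule l2_scale[OF vl2])
  have orth: "l2inner (y k) (w a) = 0" if "a \<in> I" for k a
  proof -
    have "l2inner (y k) (w a) = complex_of_real (1 / l2norm (v k)) * l2inner (v k) (w a)"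
      unfolding y_def by (rule l2inner_scale_left[OF vl2 wl[OF that]])
    also have "l2inner (v k) (w a) = 0"
      unfolding v_def by (rule l2inner_proj_on_residual[OF I that xD(1)])
    finally show ?thesis by simp
  qed
  have "eventually (\<lambda>k. l2inner (y k) (y k) = 1 \<and> (\<forall>a\<in>I. l2inner (y k) (w a) = 0)) sequentially"
    using unit by eventually_elim (simp add: l2inner_self[OF yl2] orth)
  then show ?thesis using that yl2 close by blast
qed

lemma ess_num_range_orthogonal_seq:
  fixes T :: "'n::finite \<Rightarrow> op"
  assumes T: "\<forall>j. bounded_op (T j)" and \<mu>: "\<mu> \<in> ess_num_range T"
    and I: "finite I" "orthonormal_on w I"
  obtains y where "\<And>k. y k \<in> l2"
    and "eventually (\<lambda>k. l2inner (y k) (y k) = 1 \<and> (\<forall>a\<in>I. l2inner (y k) (w a) = 0)) sequentially"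
    and "\<And>j. (\<lambda>k. l2inner (T j (y k)) (y k)) \<longlonglongrightarrow> \<mu> j"
    and "\<And>j r. r \<in> l2 \<Longrightarrow> (\<lambda>k. l2inner (T j (y k)) r) \<longlonglongrightarrow> 0"
    and "\<And>j r. r \<in> l2 \<Longrightarrow> (\<lambda>k. l2inner (T j r) (y k)) \<longlonglongrightarrow> 0"
proof -
  obtain x where x: "orthonormal_seq x" "\<And>j. (\<lambda>k. l2inner (T j (x k)) (x k)) \<longlonglongrightarrow> \<mu> j"
    using \<mu> by (auto simp: ess_num_range_def)
  note xD = orthonormal_seqD[OF x(1)]
  obtain y where y: "\<And>k. y k \<in> l2"
    "eventually (\<lambda>k. l2inner (y k) (y k) = 1 \<and> (\<forall>a\<in>I. l2inner (y k) (w a) = 0)) sequentially"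
    "(\<lambda>k. l2norm (\<lambda>i. y k i - x k i)) \<longlonglongrightarrow> 0"
    using deflated_orthonormal_seq[OF x(1) I] by blast
  note perturb = l2inner_perturb_tendsto[OF spec[OF T] xD(1,3) y(1) y(3)]
  have "(\<lambda>k. (l2inner (T j (y k)) (y k) - l2inner (T j (x k)) (x k)) + l2inner (T j (x k)) (x k))
          \<longlonglongrightarrow> 0 + \<mu> j" for j
    by (intro tendsto_add perturb(1)[OF l2_zero] x(2))
  then have diag: "(\<lambda>k. l2inner (T j (y k)) (y k)) \<longlonglongrightarrow> \<mu> j" for j by simp
  have "(\<lambda>k. (l2inner (T j (y k)) r - l2inner (T j (x k)) r) + l2inner (T j (x k)) r) \<longlonglongrightarrow> 0 + 0"
    if "r \<in> l2" for j r
    by (intro tendsto_add perturb(2)[OF that] bounded_op_orthonormal_seq_weakly_null[OF spec[OF T] x(1) that])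
  then have left: "(\<lambda>k. l2inner (T j (y k)) r) \<longlonglongrightarrow> 0" if "r \<in> l2" for j r
    using that by simp
  have "(\<lambda>k. (l2inner (T j r) (y k) - l2inner (T j r) (x k)) + l2inner (T j r) (x k)) \<longlonglongrightarrow> 0 + 0"
    if "r \<in> l2" for j r
    by (intro tendsto_add perturb(3)[OF that]
        l2inner_orthonormal_seq_right_tendsto_0[OF x(1) bounded_op_l2[OF spec[OF T] that]])
  then have right: "(\<lambda>k. l2inner (T j r) (y k)) \<longlonglongrightarrow> 0" if "r \<in> l2" for j r
    using that by simp
  show ?thesis by (rule that[OF y(1,2) diag left right])
qed

lemma ess_num_range_orthogonal_witness:
  fixes T :: "'n::finite \<Rightarrow> op"
  assumes T: "\<forall>j. bounded_op (T j)" and \<mu>: "\<mu> \<in> ess_num_range T"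
    and I: "finite I" "orthonormal_on w I" and r: "r \<in> l2" and \<eta>: "\<eta> > 0"
  obtains y where "y \<in> l2" "l2inner y y = 1" "\<forall>a\<in>I. l2inner y (w a) = 0"
    "\<And>j. cmod (l2inner (T j y) y - \<mu> j) \<le> \<eta>"
    "\<And>j. cmod (l2inner (T j y) r) \<le> \<eta>" "\<And>j. cmod (l2inner (T j r) y) \<le> \<eta>"
proof -
  obtain y where y: "\<And>k. y k \<in> l2"
    "eventually (\<lambda>k. l2inner (y k) (y k) = 1 \<and> (\<forall>a\<in>I. l2inner (y k) (w a) = 0)) sequentially"
    "\<And>j. (\<lambda>k. l2inner (T j (y k)) (y k)) \<longlonglongrightarrow> \<mu> j"
    "\<And>j r. r \<in> l2 \<Longrightarrow> (\<lambda>k. l2inner (T j (y k)) r) \<longlonglongrightarrow> 0"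
    "\<And>j r. r \<in> l2 \<Longrightarrow> (\<lambda>k. l2inner (T j r) (y k)) \<longlonglongrightarrow> 0"
    using ess_num_range_orthogonal_seq[OF T \<mu> I] by blast
  have small: "eventually (\<lambda>k. cmod (f k - c) < \<eta>) sequentially" if "f \<longlonglongrightarrow> c" for f :: "nat \<Rightarrow> complex" and c
    using order_tendstoD(2)[OF tendsto_norm[OF tendsto_diff[OF that tendsto_const[of c]]]] \<eta> by simp
  have "eventually (\<lambda>k. \<forall>j. cmod (l2inner (T j (y k)) (y k) - \<mu> j) < \<eta> \<and>
      cmod (l2inner (T j (y k)) r - 0) < \<eta> \<and> cmod (l2inner (T j r) (y k) - 0) < \<eta>) sequentially"
    by (intro eventually_all_finite eventually_conj small y(3) y(4,5)[OF r])
  from eventually_conj[OF y(2) this] obtain k where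
    "l2inner (y k) (y k) = 1" "\<forall>a\<in>I. l2inner (y k) (w a) = 0"
    "\<forall>j. cmod (l2inner (T j (y k)) (y k) - \<mu> j) < \<eta> \<and>
      cmod (l2inner (T j (y k)) r) < \<eta> \<and> cmod (l2inner (T j r) (y k)) < \<eta>"
    by (auto simp: eventually_sequentially)
  then show ?thesis by (intro that[OF y(1)]) (auto intro: less_imp_le)
qed

section \<open>Distances in the maximum norm\<close>

lemma maxdist_le:
  fixes a b :: "'n::finite \<Rightarrow> complex"
  assumes "\<And>j. cmod (a j - b j) \<le> X" shows "maxdist a b \<le> X"
  unfolding maxdist_def using assms by (subst Max_le_iff) auto

lemma maxdist_ge:
  fixes a b :: "'n::finite \<Rightarrow> complex"
  shows "cmod (a j - b j) \<le> maxdist a b"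
  unfolding maxdist_def by (rule Max_ge) auto

lemma maxdist_nonneg:
  fixes a b :: "'n::finite \<Rightarrow> complex"
  shows "0 \<le> maxdist a b"
  using maxdist_ge[of a undefined b] by (meson norm_ge_zero order_trans)

lemma maxdist_commute: "maxdist a b = maxdist b a"
  unfolding maxdist_def by (simp add: norm_minus_commute)

lemma maxdist_triangle:
  fixes a b c :: "'n::finite \<Rightarrow> complex"
  shows "maxdist a c \<le> maxdist a b + maxdist b c"
proof (rule maxdist_le)
  fix j
  have "cmod (a j - c j) \<le> cmod (a j - b j) + cmod (b j - c j)"
    using norm_triangle_ineq[of "a j - b j" "b j - c j"] by simp
  also have "\<dots> \<le> maxdist a b + maxdist b c" by (intro add_mono maxdist_ge)
  finally show "cmod (a j - c j) \<le> maxdist a b + maxdist b c" .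
qed

lemma setdist_max_nonneg:
  fixes a :: "'n::finite \<Rightarrow> complex"
  assumes "S \<noteq> {}" shows "0 \<le> setdist_max a S"
  unfolding setdist_max_def using assms maxdist_nonneg by (intro cInf_greatest) auto

lemma setdist_max_approx:
  fixes a :: "'n::finite \<Rightarrow> complex"
  assumes "S \<noteq> {}" and "\<epsilon> > 0"
  obtains b where "b \<in> S" "maxdist a b < setdist_max a S + \<epsilon>"
proof -
  have "Inf (maxdist a ` S) < setdist_max a S + \<epsilon>" using assms(2) by (simp add: setdist_max_def)
  then show ?thesis using cInf_lessD[of "maxdist a ` S"] assms(1) that by blast
qed

lemma powr_add3_le:
  fixes x y z p :: real
  assumes "x \<ge> 0" "y \<ge> 0" "z \<ge> 0" "p > 0"
  shows "(x + y + z) powr p \<le> 3 powr p * (x powr p + y powr p + z powr p)"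
proof -
  define m where "m = max x (max y z)"
  have "x + y + z \<le> 3 * m" unfolding m_def by linarith
  then have "(x + y + z) powr p \<le> (3 * m) powr p" using assms by (intro powr_mono2) auto
  also have "\<dots> = 3 powr p * m powr p" by (rule powr_mult)
  also have "m powr p \<le> x powr p + y powr p + z powr p"
    unfolding m_def by (auto simp: max_def)
  then have "3 powr p * m powr p \<le> 3 powr p * (x powr p + y powr p + z powr p)" by (intro mult_left_mono) auto
  finally show ?thesis .
qed

lemma summable_powr_le_add3:
  fixes x a b c :: "nat \<Rightarrow> real"
  assumes p: "p > 0" and le: "\<And>k. 0 \<le> x k" "\<And>k. x k \<le> a k + b k + c k"
    and nonneg: "\<And>k. 0 \<le> a k" "\<And>k. 0 \<le> b k" "\<And>k. 0 \<le> c k"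
    and summable: "summable (\<lambda>k. a k powr p)" "summable (\<lambda>k. b k powr p)" "summable (\<lambda>k. c k powr p)"
  shows "summable (\<lambda>k. x k powr p)"
proof (rule summable_comparison_test'[of "\<lambda>k. 3 powr p * (a k powr p + b k powr p + c k powr p)" 0])
  show "summable (\<lambda>k. 3 powr p * (a k powr p + b k powr p + c k powr p))"
    by (intro summable_mult summable_add summable)
  fix k
  have "x k powr p \<le> (a k + b k + c k) powr p" using le p by (intro powr_mono2) auto
  also have "\<dots> \<le> 3 powr p * (a k powr p + b k powr p + c k powr p)" by (rule powr_add3_le[OF nonneg p])
  finally show "norm (x k powr p) \<le> 3 powr p * (a k powr p + b k powr p + c k powr p)" by simp
qed

lemma summable_half_power_powr:
  fixes p :: real assumes "p > 0" shows "summable (\<lambda>k. ((1/2)^k) powr p)"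
proof -
  have "((1/2)^k) powr p = ((1/2) powr p) ^ k" for k :: nat
    by (simp add: powr_realpow[symmetric] powr_powr powr_power mult.commute)
  moreover have "norm ((1/2::real) powr p) < 1"
  proof -
    have "(1/2::real) powr p = 2 powr (- p)" by (simp add: powr_minus_divide powr_divide)
    also have "\<dots> < 1" by (rule powr_less_one) (use assms in auto)
    finally show ?thesis by simp
  qed
  ultimately show ?thesis using summable_geometric by simp
qed

lemma near_best_approximations_exist:
  fixes a :: "nat \<Rightarrow> 'n::finite \<Rightarrow> complex"
  assumes S: "S \<noteq> {}"
  obtains b where "\<forall>k. b k \<in> S" "\<And>k. maxdist (a k) (b k) < setdist_max (a k) S + (1/2)^k"
proof -
  have "\<exists>m. m \<in> S \<and> maxdist (a k) m < setdist_max (a k) S + (1/2)^k" for k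
    by (rule setdist_max_approx[OF S, of "(1/2)^k" "a k"]) auto
  then have "\<forall>k. \<exists>m. m \<in> S \<and> maxdist (a k) m < setdist_max (a k) S + (1/2)^k" by blast
  from choice[OF this] obtain b where "\<forall>k. b k \<in> S \<and> maxdist (a k) (b k) < setdist_max (a k) S + (1/2)^k"
    by blast
  then show ?thesis by (intro that[of b]) simp_all
qed

lemma summable_powr_maxdist_near_best:
  fixes a b c :: "nat \<Rightarrow> 'n::finite \<Rightarrow> complex"
  assumes p: "p > 0" and S: "S \<noteq> {}" and dist: "summable (\<lambda>k. setdist_max (a k) S powr p)"
    and near: "\<And>k. maxdist (a k) (b k) < setdist_max (a k) S + (1/2)^k"
    and close: "summable (\<lambda>k. maxdist (c k) (b k) powr p)"
  shows "summable (\<lambda>k. maxdist (a k) (c k) powr p)"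
proof -
  have le: "maxdist (a k) (c k) \<le> setdist_max (a k) S + (1/2)^k + maxdist (c k) (b k)" for k
    using maxdist_triangle[of "a k" "c k" "b k"] near[of k] maxdist_commute[of "b k" "c k"] by linarith
  show ?thesis
    by (rule summable_powr_le_add3[OF p _ le _ _ _ dist summable_half_power_powr[OF p] close])
      (auto simp: maxdist_nonneg setdist_max_nonneg[OF S])
qed

section \<open>An orthonormal basis with prescribed diagonal\<close>

definition orthonormal_list :: "vec list \<Rightarrow> bool" where
  "orthonormal_list U \<longleftrightarrow> orthonormal_on ((!) U) {..<length U}"

definition proj_list :: "vec list \<Rightarrow> vec \<Rightarrow> vec" where
  "proj_list U x = proj_on ((!) U) {..<length U} x"

lemma orthonormal_list_l2: "orthonormal_list U \<Longrightarrow> a < length U \<Longrightarrow> U ! a \<in> l2"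
  by (simp add: orthonormal_list_def orthonormal_on_def)

lemma orthonormal_list_l2inner:
  "orthonormal_list U \<Longrightarrow> a < length U \<Longrightarrow> b < length U \<Longrightarrow> l2inner (U!a) (U!b) = (if a = b then 1 else 0)"
  by (simp add: orthonormal_list_def orthonormal_on_def)

lemma orthonormal_list_append:
  assumes U: "orthonormal_list U" and u: "u \<in> l2" "l2inner u u = 1" "\<forall>a<length U. l2inner u (U!a) = 0"
  shows "orthonormal_list (U @ [u])"
  unfolding orthonormal_list_def orthonormal_on_def
proof (intro conjI ballI)
  fix k assume "k \<in> {..<length (U @ [u])}"
  then show "(U @ [u]) ! k \<in> l2" using U u by (auto simp: nth_append orthonormal_list_l2)
next
  fix a b assume ab: "a \<in> {..<length (U @ [u])}" "b \<in> {..<length (U @ [u])}"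
  show "l2inner ((U @ [u]) ! a) ((U @ [u]) ! b) = (if a = b then 1 else 0)"
  proof (cases "a < length U"; cases "b < length U")
    assume "a < length U" "b < length U"
    then show ?thesis using U by (simp add: nth_append orthonormal_list_l2inner)
  next
    assume a: "a < length U" and b: "\<not> b < length U"
    then have "b = length U" using ab by simp
    then show ?thesis using a u l2inner_commute[OF u(1) orthonormal_list_l2[OF U a]] by (simp add: nth_append)
  next
    assume a: "\<not> a < length U" and b: "b < length U"
    then have "a = length U" using ab by simp
    then show ?thesis using b u by (simp add: nth_append)
  next
    assume a: "\<not> a < length U" and b: "\<not> b < length U"
    then have "a = length U" "b = length U" using ab by auto
    then show ?thesis using u by (simp add: nth_append)
  qed
qed

lemma proj_list_l2: "orthonormal_list U \<Longrightarrow> proj_list U x \<in> l2"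
  unfolding proj_list_def orthonormal_list_def by (rule proj_on_l2)

lemma proj_list_append: "proj_list (U @ [u]) x = (\<lambda>i. proj_list U x i + l2inner x u * u i)"
  unfolding proj_list_def proj_on_def by (auto simp: nth_append lessThan_Suc)

lemma l2inner_proj_list_left:
  assumes "orthonormal_list U" "x \<in> l2" "z \<in> l2" "\<forall>a<length U. l2inner (U!a) z = 0"
  shows "l2inner (proj_list U x) z = 0"
  unfolding proj_list_def proj_on_def using assms
  by (subst l2inner_sum_left) (auto simp: orthonormal_list_l2)

lemma l2inner_lincomb_orthonormal_pair:
  assumes "y \<in> l2" "r \<in> l2" "l2inner y y = 1" "l2inner r r = 1" "l2inner y r = 0" "l2inner r y = 0"
  shows "l2inner (\<lambda>i. a * y i + b * r i) (\<lambda>i. c * y i + d * r i) = a * cnj c + b * cnj d"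
  using assms by (simp add: l2inner_lincomb_left[OF assms(1,2) l2_lincomb] l2inner_lincomb_right)

definition residual_direction :: "vec list \<Rightarrow> vec \<Rightarrow> vec \<Rightarrow> bool" where
  "residual_direction U e r \<longleftrightarrow> r \<in> l2 \<and> l2inner r r = 1 \<and> (\<forall>a<length U. l2inner r (U!a) = 0) \<and>
     e = (\<lambda>i. proj_list U e i + l2inner e r * r i)"

lemma l2norm_residual_direction:
  assumes "residual_direction U e r"
  shows "l2norm (\<lambda>i. e i - proj_list U e i) = cmod (l2inner e r)"
proof -
  have r: "r \<in> l2" "l2inner r r = 1" and e: "e = (\<lambda>i. proj_list U e i + l2inner e r * r i)"
    using assms by (auto simp: residual_direction_def)
  have "(\<lambda>i. e i - proj_list U e i) = (\<lambda>i. l2inner e r * r i)" by (subst (1) e) simp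
  then show ?thesis using l2norm_scale[OF r(1)] l2norm_eq_1[OF r] by simp
qed

lemma unit_vector_orthogonal_exists:
  assumes U: "orthonormal_list U"
  obtains r where "r \<in> l2" "l2inner r r = 1" "\<forall>a<length U. l2inner r (U!a) = 0"
proof -
  have "finite {..<length U}" "orthonormal_on ((!) U) {..<length U}"
    using U by (simp_all add: orthonormal_list_def)
  from deflated_orthonormal_seq[OF orthonormal_seq_basis_vec this]
  obtain y where "\<And>k. y k \<in> l2"
    "eventually (\<lambda>k. l2inner (y k) (y k) = 1 \<and> (\<forall>a\<in>{..<length U}. l2inner (y k) (U!a) = 0)) sequentially"
    by blast
  then show ?thesis using that by (auto simp: eventually_sequentially)
qed

lemma residual_direction_exists:
  assumes U: "orthonormal_list U" and e: "e \<in> l2"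
  shows "\<exists>r. residual_direction U e r"
proof -
  define g where "g = (\<lambda>i. e i - proj_list U e i)"
  have P: "proj_list U e \<in> l2" by (rule proj_list_l2[OF U])
  have gl2: "g \<in> l2" unfolding g_def by (rule l2_diff[OF e P])
  have gU: "l2inner g (U!a) = 0" if "a < length U" for a
    using l2inner_proj_on_residual[of "{..<length U}" "(!) U" a e] U that e
    by (simp add: g_def proj_list_def orthonormal_list_def)
  show ?thesis
  proof (cases "g = (\<lambda>_. 0)")
    case True
    obtain r where r: "r \<in> l2" "l2inner r r = 1" "\<forall>a<length U. l2inner r (U!a) = 0"
      by (rule unit_vector_orthogonal_exists[OF U])
    have eP: "e = proj_list U e" using True by (auto simp: g_def fun_eq_iff)
    have "l2inner e r = 0"
      using l2inner_proj_list_left[OF U e r(1)] r(3) l2inner_commute[OF r(1) orthonormal_list_l2[OF U]] eP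
      by simp
    then show ?thesis using r eP by (auto simp: residual_direction_def)
  next
    case False
    define ng where "ng = l2norm g"
    have ng0: "ng > 0" using False l2norm_nonneg[OF gl2] l2norm_zero_iff[OF gl2] by (auto simp: ng_def)
    define r where "r = (\<lambda>i. complex_of_real (1 / ng) * g i)"
    have rl2: "r \<in> l2" unfolding r_def by (rule l2_scale[OF gl2])
    have "l2norm r = 1" unfolding r_def using l2norm_scale[OF gl2, of "complex_of_real (1 / ng)"] ng0
      by (simp add: ng_def norm_divide)
    then have rr: "l2inner r r = 1" using l2inner_self[OF rl2] by simp
    have "l2inner r (U!a) = complex_of_real (1 / ng) * l2inner g (U!a)" if "a < length U" for a
      unfolding r_def by (rule l2inner_scale_left[OF gl2 orthonormal_list_l2[OF U that]])
    then have rU: "\<forall>a<length U. l2inner r (U!a) = 0" using gU by simp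
    have "l2inner e g = l2inner (\<lambda>i. g i + proj_list U e i) g" by (simp add: g_def)
    also have "\<dots> = l2inner g g"
      using l2inner_add_left[OF gl2 P gl2] l2inner_proj_list_left[OF U e gl2]
        gU l2inner_commute[OF gl2 orthonormal_list_l2[OF U]] by simp
    finally have "l2inner e r = complex_of_real ng"
      unfolding r_def l2inner_scale_right[OF gl2 e] using l2inner_self[OF gl2] ng0
      by (simp add: ng_def power2_eq_square)
    then have "e = (\<lambda>i. proj_list U e i + l2inner e r * r i)"
      unfolding r_def g_def using ng0 by simp
    then show ?thesis using rl2 rr rU by (auto simp: residual_direction_def)
  qed
qed

lemma diag_rotation_error:
  fixes c s :: real
  assumes T: "bounded_op T" and y: "y \<in> l2" "l2inner y y = 1" and r: "r \<in> l2" "l2inner r r = 1"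
    and yr: "l2inner y r = 0" and cs: "c\<^sup>2 + s\<^sup>2 = 1"
  defines "u \<equiv> \<lambda>i. complex_of_real c * y i + complex_of_real s * r i"
  shows "cmod (l2inner (T u) u - \<mu>) \<le> cmod (l2inner (T y) y - \<mu>) + cmod (l2inner (T y) r)
           + cmod (l2inner (T r) y) + s\<^sup>2 * cmod (l2inner (T r) r - \<mu>)"
proof -
  let ?c = "complex_of_real c" and ?s = "complex_of_real s"
  have ul2: "u \<in> l2" unfolding u_def by (rule l2_lincomb[OF y(1) r(1)])
  have Tl2: "T y \<in> l2" "T r \<in> l2" using bounded_op_l2[OF T] y(1) r(1) by auto
  have "T u = (\<lambda>i. T (\<lambda>i. ?c * y i) i + T (\<lambda>i. ?s * r i) i)"
    unfolding u_def by (rule bounded_op_add[OF T l2_scale[OF y(1)] l2_scale[OF r(1)]])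
  also have "\<dots> = (\<lambda>i. ?c * T y i + ?s * T r i)"
    by (simp only: bounded_op_scale[OF T y(1)] bounded_op_scale[OF T r(1)])
  finally have Tu: "T u = (\<lambda>i. ?c * T y i + ?s * T r i)" .
  have "complex_of_real (c * c + s * s) = 1" using cs by (simp add: power2_eq_square)
  then have one: "?c * ?c + ?s * ?s = 1" by simp
  have "l2inner (T u) u = ?c * (?c * l2inner (T y) y + ?s * l2inner (T y) r) + ?s * (?c * l2inner (T r) y + ?s * l2inner (T r) r)"
    unfolding Tu l2inner_lincomb_left[OF Tl2 ul2] unfolding u_def
      l2inner_lincomb_right[OF y(1) r(1) Tl2(1)] l2inner_lincomb_right[OF y(1) r(1) Tl2(2)] by simp
  then have "l2inner (T u) u - \<mu> = (?c * ?c) * (l2inner (T y) y - \<mu>) + (?c * ?s) * l2inner (T y) r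
      + (?s * ?c) * l2inner (T r) y + (?s * ?s) * (l2inner (T r) r - \<mu>) + (?c * ?c + ?s * ?s - 1) * \<mu>"
    by (simp add: algebra_simps)
  then have eq: "l2inner (T u) u - \<mu> = (?c * ?c) * (l2inner (T y) y - \<mu>) + (?c * ?s) * l2inner (T y) r
      + (?s * ?c) * l2inner (T r) y + (?s * ?s) * (l2inner (T r) r - \<mu>)"
    using one by simp
  have "c * c \<le> 1" using cs zero_le_square[of s] unfolding power2_eq_square by linarith
  have "2 * \<bar>c\<bar> * \<bar>s\<bar> \<le> \<bar>c\<bar>\<^sup>2 + \<bar>s\<bar>\<^sup>2"
    by (rule sum_squares_bound)
  then have "\<bar>c * s\<bar> \<le> 1" using cs by (simp add: abs_mult)
  have "cmod (l2inner (T u) u - \<mu>) \<le> (c * c) * cmod (l2inner (T y) y - \<mu>) + \<bar>c * s\<bar> * cmod (l2inner (T y) r)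
      + \<bar>c * s\<bar> * cmod (l2inner (T r) y) + (s * s) * cmod (l2inner (T r) r - \<mu>)"
    unfolding eq by (intro order_trans[OF norm_triangle_ineq] add_mono order_refl) (simp_all add: norm_mult abs_mult)
  also have "\<dots> \<le> 1 * cmod (l2inner (T y) y - \<mu>) + 1 * cmod (l2inner (T y) r)
      + 1 * cmod (l2inner (T r) y) + s\<^sup>2 * cmod (l2inner (T r) r - \<mu>)"
    using \<open>c * c \<le> 1\<close> \<open>\<bar>c * s\<bar> \<le> 1\<close> by (intro add_mono mult_right_mono) (simp_all add: power2_eq_square)
  finally show ?thesis by simp
qed

lemma rotation_step:
  fixes c s :: real
  assumes U: "orthonormal_list U" and res: "residual_direction U e r" and e: "e \<in> l2"
    and y: "y \<in> l2" "l2inner y y = 1" "\<forall>a<length U. l2inner y (U!a) = 0" "l2inner y r = 0"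
    and cs: "c\<^sup>2 + s\<^sup>2 = 1"
  defines "u \<equiv> \<lambda>i. complex_of_real c * y i + complex_of_real s * r i"
    and "r' \<equiv> \<lambda>i. - complex_of_real s * y i + complex_of_real c * r i"
  shows "orthonormal_list (U @ [u])" "residual_direction (U @ [u]) e r'"
    "l2inner e r' = complex_of_real c * l2inner e r"
proof -
  let ?c = "complex_of_real c" and ?s = "complex_of_real s"
  have r: "r \<in> l2" "l2inner r r = 1" "\<forall>a<length U. l2inner r (U!a) = 0"
    and e_eq: "e = (\<lambda>i. proj_list U e i + l2inner e r * r i)"
    using res by (auto simp: residual_direction_def)
  have "complex_of_real (c * c + s * s) = 1" using cs by (simp add: power2_eq_square)
  then have one: "?c * ?c + ?s * ?s = 1" by simp
  have ry: "l2inner r y = 0" using l2inner_commute[OF y(1) r(1)] y(4) by simp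
  have Uy: "l2inner (U!a) y = 0" if "a < length U" for a
    using l2inner_commute[OF y(1) orthonormal_list_l2[OF U that]] y(3) that by simp
  have ul2: "u \<in> l2" and r'l2: "r' \<in> l2" unfolding u_def r'_def by (rule l2_lincomb[OF y(1) r(1)])+
  note pair = l2inner_lincomb_orthonormal_pair[OF y(1) r(1) y(2) r(2) y(4) ry]
  have uu: "l2inner u u = 1" unfolding u_def pair using one by simp
  have r'r': "l2inner r' r' = 1" unfolding r'_def pair using one by (simp add: algebra_simps)
  have r'u: "l2inner r' u = 0" unfolding r'_def u_def pair by (simp add: algebra_simps)
  have "l2inner u (U!a) = 0" "l2inner r' (U!a) = 0" if "a < length U" for a
    unfolding u_def r'_def l2inner_lincomb_left[OF y(1) r(1) orthonormal_list_l2[OF U that]]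
    using y(3) r(3) that by simp_all
  then have uU: "\<forall>a<length U. l2inner u (U!a) = 0" and r'U: "\<forall>a<length U. l2inner r' (U!a) = 0"
    by simp_all
  show U': "orthonormal_list (U @ [u])" by (rule orthonormal_list_append[OF U ul2 uu uU])
  have ey: "l2inner e y = 0"
    using arg_cong[OF e_eq, of "\<lambda>v. l2inner v y"] l2inner_proj_list_left[OF U e y(1)] Uy ry
    by (simp add: l2inner_add_left[OF proj_list_l2[OF U] l2_scale[OF r(1)] y(1)] l2inner_scale_left[OF r(1) y(1)])
  have eu: "l2inner e u = ?s * l2inner e r" and er': "l2inner e r' = ?c * l2inner e r"
    unfolding u_def r'_def l2inner_lincomb_right[OF y(1) r(1) e] using ey by simp_all
  then show "l2inner e r' = ?c * l2inner e r" by simp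
  have "e = (\<lambda>i. proj_list (U @ [u]) e i + l2inner e r' * r' i)"
  proof
    fix i
    have "proj_list (U @ [u]) e i + l2inner e r' * r' i = proj_list U e i + l2inner e r * (?c * ?c + ?s * ?s) * r i"
      unfolding proj_list_append eu er' unfolding u_def r'_def by (simp add: algebra_simps)
    then show "e i = proj_list (U @ [u]) e i + l2inner e r' * r' i" using fun_cong[OF e_eq, of i] one by simp
  qed
  then show "residual_direction (U @ [u]) e r'"
    using r'l2 r'r' r'U r'u by (auto simp: residual_direction_def nth_append less_Suc_eq)
qed

lemma l2inner_diag_sub_ess_num_range_le:
  fixes T :: "'n::finite \<Rightarrow> op"
  assumes T: "\<forall>j. bounded_op (T j)" and C: "\<forall>j. \<forall>x\<in>l2. l2norm (T j x) \<le> C * l2norm x"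
    and \<mu>: "\<mu> \<in> ess_num_range T" and r: "r \<in> l2" "l2inner r r = 1"
  shows "cmod (l2inner (T j r) r - \<mu> j) \<le> 2 * C"
proof -
  have "cmod (l2inner (T j r) r - \<mu> j) \<le> cmod (l2inner (T j r) r) + cmod (\<mu> j)"
    by (rule norm_triangle_ineq4)
  also have "\<dots> \<le> C + C"
    using l2inner_diag_le[of "T j" C r] T C r ess_num_range_bound[OF T C \<mu>] by (intro add_mono) auto
  finally show ?thesis by simp
qed

lemma ess_num_range_rotation_step:
  fixes T :: "'n::finite \<Rightarrow> op"
  assumes T: "\<forall>j. bounded_op (T j)" and C: "\<forall>j. \<forall>x\<in>l2. l2norm (T j x) \<le> C * l2norm x"
    and \<mu>: "\<mu> \<in> ess_num_range T" and U: "orthonormal_list U" and res: "residual_direction U e r"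
    and e: "e \<in> l2" and \<sigma>: "0 < \<sigma>" "\<sigma> < 1"
  obtains u r' where "orthonormal_list (U @ [u])" "residual_direction (U @ [u]) e r'"
    "l2inner e r' = complex_of_real (sqrt (1 - \<sigma>)) * l2inner e r"
    "maxdist (\<lambda>j. l2inner (T j u) u) \<mu> \<le> (3 + 2 * C) * \<sigma>"
proof -
  have r: "r \<in> l2" "l2inner r r = 1" "\<forall>a<length U. l2inner r (U!a) = 0"
    using res by (auto simp: residual_direction_def)
  have "orthonormal_on ((!) (U @ [r])) {..<length (U @ [r])}"
    using orthonormal_list_append[OF U r] by (simp add: orthonormal_list_def)
  from ess_num_range_orthogonal_witness[OF T \<mu> finite_lessThan this r(1) \<sigma>(1)]
  obtain y where y: "y \<in> l2" "l2inner y y = 1" "\<forall>a\<in>{..<length (U @ [r])}. l2inner y ((U @ [r]) ! a) = 0"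
    and err: "\<And>j. cmod (l2inner (T j y) y - \<mu> j) \<le> \<sigma>"
      "\<And>j. cmod (l2inner (T j y) r) \<le> \<sigma>" "\<And>j. cmod (l2inner (T j r) y) \<le> \<sigma>"
    by blast
  have yU: "\<forall>a<length U. l2inner y (U!a) = 0"
  proof (intro allI impI)
    fix a assume "a < length U"
    then show "l2inner y (U!a) = 0" using bspec[OF y(3), of a] by (simp add: nth_append)
  qed
  have yr: "l2inner y r = 0" using bspec[OF y(3), of "length U"] by simp
  define c where "c = sqrt (1 - \<sigma>)"
  define s where "s = sqrt \<sigma>"
  have cs: "c\<^sup>2 + s\<^sup>2 = 1" and s2: "s\<^sup>2 = \<sigma>" using \<sigma> by (simp_all add: c_def s_def)
  have "cmod (l2inner (T j (\<lambda>i. complex_of_real c * y i + complex_of_real s * r i))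
                     (\<lambda>i. complex_of_real c * y i + complex_of_real s * r i) - \<mu> j) \<le> (3 + 2 * C) * \<sigma>" for j
  proof -
    have "cmod (l2inner (T j r) r - \<mu> j) \<le> 2 * C"
      by (rule l2inner_diag_sub_ess_num_range_le[OF T C \<mu> r(1,2)])
    then have "s\<^sup>2 * cmod (l2inner (T j r) r - \<mu> j) \<le> \<sigma> * (2 * C)"
      using s2 \<sigma> by (simp add: mult_left_mono)
    then show ?thesis
      using diag_rotation_error[OF spec[OF T, of j] y(1,2) r(1,2) yr cs, of "\<mu> j"] err[of j]
      by (simp add: algebra_simps)
  qed
  note rot = rotation_step[OF U res e y(1,2) yU yr cs]
  show ?thesis
  proof (rule that[OF rot(1,2)])
    show "maxdist (\<lambda>j. l2inner (T j (\<lambda>i. complex_of_real c * y i + complex_of_real s * r i))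
                     (\<lambda>i. complex_of_real c * y i + complex_of_real s * r i)) \<mu> \<le> (3 + 2 * C) * \<sigma>"
      by (rule maxdist_le) fact
  qed (use rot(3) in \<open>simp add: c_def\<close>)
qed

lemma rotation_steps:
  fixes T :: "'n::finite \<Rightarrow> op" and \<mu> :: "nat \<Rightarrow> 'n \<Rightarrow> complex"
  assumes T: "\<forall>j. bounded_op (T j)" and C: "\<forall>j. \<forall>x\<in>l2. l2norm (T j x) \<le> C * l2norm x"
    and \<mu>: "\<forall>k. \<mu> k \<in> ess_num_range T" and U: "orthonormal_list U" and res: "residual_direction U e r"
    and e: "e \<in> l2" and \<sigma>: "0 < \<sigma>" "\<sigma> < 1"
  shows "\<exists>V r'. length V = n \<and> orthonormal_list (U @ V) \<and> residual_direction (U @ V) e r'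
     \<and> l2inner e r' = complex_of_real (sqrt (1 - \<sigma>)) ^ n * l2inner e r
     \<and> (\<forall>s<n. maxdist (\<lambda>j. l2inner (T j (V!s)) (V!s)) (\<mu> (length U + s)) \<le> (3 + 2 * C) * \<sigma>)"
proof (induction n)
  case 0
  show ?case using U res by (intro exI[of _ "[]"] exI[of _ r]) simp
next
  case (Suc n)
  then obtain V r' where V: "length V = n" "orthonormal_list (U @ V)" "residual_direction (U @ V) e r'"
    "l2inner e r' = complex_of_real (sqrt (1 - \<sigma>)) ^ n * l2inner e r"
    "\<forall>s<n. maxdist (\<lambda>j. l2inner (T j (V!s)) (V!s)) (\<mu> (length U + s)) \<le> (3 + 2 * C) * \<sigma>"
    by blast
  obtain u r'' where u: "orthonormal_list (U @ V @ [u])" "residual_direction (U @ V @ [u]) e r''"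
    "l2inner e r'' = complex_of_real (sqrt (1 - \<sigma>)) * l2inner e r'"
    "maxdist (\<lambda>j. l2inner (T j u) u) (\<mu> (length U + n)) \<le> (3 + 2 * C) * \<sigma>"
    using ess_num_range_rotation_step[OF T C spec[OF \<mu>, of "length U + n"] V(2,3) e \<sigma>] V(1) by auto
  have "\<forall>s<Suc n. maxdist (\<lambda>j. l2inner (T j ((V @ [u])!s)) ((V @ [u])!s)) (\<mu> (length U + s)) \<le> (3 + 2 * C) * \<sigma>"
    using V(1,5) u(4) by (auto simp: nth_append less_Suc_eq)
  then show ?case
    using u(1-3) V(1,4) by (intro exI[of _ "V @ [u]"] exI[of _ r'']) (simp add: mult.assoc)
qed

lemma stage_length_exists:
  fixes p A :: real
  assumes "p > 1" "A > 0"
  shows "\<exists>N::nat. N \<ge> 2 \<and> real (2*m+2) * A powr p * real N powr (1-p) \<le> (1/2)^m"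
proof -
  have "((\<lambda>N. real N powr (1-p)) \<longlongrightarrow> 0) sequentially"
    by (rule tendsto_neg_powr) (use assms filterlim_real_sequentially in auto)
  then have "((\<lambda>N. real (2*m+2) * A powr p * real N powr (1-p)) \<longlongrightarrow> real (2*m+2) * A powr p * 0) sequentially"
    by (intro tendsto_intros)
  then have "eventually (\<lambda>N. real (2*m+2) * A powr p * real N powr (1-p) < (1/2)^m) sequentially"
    by (rule order_tendstoD) simp
  moreover have "eventually (\<lambda>N::nat. N \<ge> 2) sequentially" by (rule eventually_ge_at_top)
  ultimately have "eventually (\<lambda>N::nat. N \<ge> 2 \<and> real (2*m+2) * A powr p * real N powr (1-p) < (1/2)^m) sequentially"
    by eventually_elim auto
  then obtain N where "N \<ge> 2" "real (2*m+2) * A powr p * real N powr (1-p) < (1/2)^m"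
    by (auto simp: eventually_sequentially)
  then show ?thesis by (intro exI[of _ N]) auto
qed

lemma stage_residual_decay:
  assumes "N \<ge> (1::nat)"
  shows "sqrt (1 - 1 / real N) ^ ((2*m+2)*N) \<le> 1 / real (m+1)"
proof -
  define q where "q = 1 - 1 / real N"
  have q0: "0 \<le> q" using assms unfolding q_def by (simp add: field_simps)
  have q1: "q \<le> exp (- (1 / real N))" unfolding q_def using exp_ge_add_one_self[of "- (1 / real N)"] by simp
  have "q ^ N \<le> exp (- (1 / real N)) ^ N" by (rule power_mono[OF q1 q0])
  also have "\<dots> = exp (real N * (- (1 / real N)))" by (rule exp_of_nat_mult[symmetric])
  also have "\<dots> = exp (-1)" using assms by simp
  finally have qN: "q ^ N \<le> exp (-1)" .
  have "q ^ ((2*m+2)*N) = (q ^ N) ^ (2*m+2)" by (metis power_mult mult.commute)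
  also have "\<dots> \<le> exp (-1) ^ (2*m+2)" by (rule power_mono[OF qN]) (simp add: q0)
  also have "\<dots> = exp (real (2*m+2) * (-1))" by (rule exp_of_nat_mult[symmetric])
  also have "\<dots> = exp (real 2 * (- real (m+1)))" by simp
  also have "\<dots> = exp (- real (m+1)) ^ 2" by (rule exp_of_nat_mult)
  finally have "sqrt (q ^ ((2*m+2)*N)) \<le> sqrt (exp (- real (m+1)) ^ 2)" by (rule real_sqrt_le_mono)
  then have "sqrt q ^ ((2*m+2)*N) \<le> exp (- real (m+1))" by (simp add: real_sqrt_power)
  also have "exp (- real (m+1)) \<le> 1 / real (m+1)"
  proof -
    have "1 + real (m+1) \<le> exp (real (m+1))" by (rule exp_ge_add_one_self)
    then have le: "real (m+1) \<le> exp (real (m+1))" by simp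
    have "exp (- real (m+1)) = 1 / exp (real (m+1))" by (metis exp_minus inverse_eq_divide)
    also have "\<dots> \<le> 1 / real (m+1)" by (rule divide_left_mono[OF le]) auto
    finally show ?thesis .
  qed
  finally show ?thesis by (simp add: q_def)
qed

lemma stage_error_sum_eq:
  fixes A p :: real
  assumes "N \<ge> (1::nat)" "A > 0"
  shows "real ((2*m+2)*N) * (A * (1 / real N)) powr p = real (2*m+2) * A powr p * real N powr (1-p)"
proof -
  have N0: "real N > 0" using assms by simp
  have "(A * (1 / real N)) powr p = A powr p / real N powr p"
    using powr_divide[of A "real N" p] by simp
  moreover have "real N powr (1 - p) = real N / real N powr p" using N0 by (simp add: powr_diff)
  ultimately show ?thesis by (simp add: field_simps)
qed

lemma stage_extension:
  fixes T :: "'n::finite \<Rightarrow> op" and \<mu> :: "nat \<Rightarrow> 'n \<Rightarrow> complex"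
  assumes T: "\<forall>j. bounded_op (T j)" and C: "\<forall>j. \<forall>x\<in>l2. l2norm (T j x) \<le> C * l2norm x" and C0: "C \<ge> 0"
    and \<mu>: "\<forall>k. \<mu> k \<in> ess_num_range T" and U: "orthonormal_list U" and p: "p > 1"
  shows "\<exists>V. V \<noteq> [] \<and> orthonormal_list (U @ V) \<and>
    (\<Sum>s<length V. maxdist (\<lambda>j. l2inner (T j (V!s)) (V!s)) (\<mu> (length U + s)) powr p) \<le> (1/2)^m \<and>
    l2norm (\<lambda>k. basis_vec i k - proj_list (U @ V) (basis_vec i) k) \<le> 1 / real (m+1)"
proof -
  define A where "A = 3 + 2 * C"
  have A0: "A > 0" using C0 by (simp add: A_def)
  obtain N :: nat where N: "N \<ge> 2" "real (2*m+2) * A powr p * real N powr (1-p) \<le> (1/2)^m"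
    using stage_length_exists[OF p A0] by blast
  define \<sigma> where "\<sigma> = 1 / real N"
  have \<sigma>: "0 < \<sigma>" "\<sigma> < 1" using N(1) by (auto simp: \<sigma>_def)
  define e where "e = basis_vec i"
  have e: "e \<in> l2" "l2inner e e = 1" by (auto simp: e_def l2inner_basis_vec_right)
  obtain r0 where r0: "residual_direction U e r0" using residual_direction_exists[OF U e(1)] by blast
  have r0_le: "cmod (l2inner e r0) \<le> 1"
    using l2_cauchy_schwarz[OF e(1), of r0] l2norm_eq_1[OF e] l2norm_eq_1[of r0] r0
    by (simp add: residual_direction_def)
  define n where "n = (2*m+2) * N"
  obtain V r' where V: "length V = n" "orthonormal_list (U @ V)" "residual_direction (U @ V) e r'"
    "l2inner e r' = complex_of_real (sqrt (1 - \<sigma>)) ^ n * l2inner e r0"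
    "\<forall>s<n. maxdist (\<lambda>j. l2inner (T j (V!s)) (V!s)) (\<mu> (length U + s)) \<le> A * \<sigma>"
    using rotation_steps[OF T C \<mu> U r0 e(1) \<sigma>, of n] by (auto simp: A_def)
  have "l2norm (\<lambda>k. e k - proj_list (U @ V) e k) = sqrt (1 - \<sigma>) ^ n * cmod (l2inner e r0)"
    using l2norm_residual_direction[OF V(3)] \<sigma> by (simp add: V(4) norm_mult norm_power)
  also have "\<dots> \<le> sqrt (1 - \<sigma>) ^ n" using r0_le \<sigma> by (simp add: mult_left_le)
  also have "\<dots> \<le> 1 / real (m+1)" using stage_residual_decay[of N m] N(1) by (simp add: n_def \<sigma>_def)
  finally have residual: "l2norm (\<lambda>k. e k - proj_list (U @ V) e k) \<le> 1 / real (m+1)" .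
  have "(\<Sum>s<length V. maxdist (\<lambda>j. l2inner (T j (V!s)) (V!s)) (\<mu> (length U + s)) powr p)
      \<le> (\<Sum>s<n. (A * \<sigma>) powr p)"
    unfolding V(1) using V(5) p by (intro sum_mono powr_mono2) (auto simp: maxdist_nonneg)
  also have "\<dots> = real (2*m+2) * A powr p * real N powr (1-p)"
    unfolding n_def \<sigma>_def using stage_error_sum_eq[of N A m p] N(1) A0 by simp
  also have "\<dots> \<le> (1/2)^m" by (rule N(2))
  finally have "(\<Sum>s<length V. maxdist (\<lambda>j. l2inner (T j (V!s)) (V!s)) (\<mu> (length U + s)) powr p) \<le> (1/2)^m" .
  moreover have "V \<noteq> []" using V(1) N(1) by (auto simp: n_def)
  ultimately show ?thesis using V(2) residual by (intro exI[of _ V]) (simp add: e_def)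
qed

lemma sum_lessThan_add: "(\<Sum>k<a + b. f k) = (\<Sum>k<a. f k) + (\<Sum>s<(b::nat). f (a + s))"
  by (induct b) (auto simp: algebra_simps)

(* Stage m absorbs the standard basis vector with index fst (prod_decode m), so every index is treated
   in infinitely many stages, with residual bounds tending to 0. *)
lemma stage_chain_exists:
  fixes T :: "'n::finite \<Rightarrow> op" and \<mu> :: "nat \<Rightarrow> 'n \<Rightarrow> complex"
  assumes T: "\<forall>j. bounded_op (T j)" and C: "\<forall>j. \<forall>x\<in>l2. l2norm (T j x) \<le> C * l2norm x" and C0: "C \<ge> 0"
    and \<mu>: "\<forall>k. \<mu> k \<in> ess_num_range T" and p: "p > 1"
  obtains Us where "\<And>m. orthonormal_list (Us m)" "\<And>m. m \<le> length (Us m)"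
    "\<And>m. (\<Sum>k<length (Us m). maxdist (\<lambda>j. l2inner (T j (Us m ! k)) (Us m ! k)) (\<mu> k) powr p) \<le> 2"
    "\<And>m. \<exists>V. Us (Suc m) = Us m @ V"
    "\<And>m. l2norm (\<lambda>k. basis_vec (fst (prod_decode m)) k
            - proj_list (Us (Suc m)) (basis_vec (fst (prod_decode m))) k) \<le> 1 / real (m+1)"
proof -
  define err where "err = (\<lambda>k v. maxdist (\<lambda>j. l2inner (T j v) v) (\<mu> k) powr p)"
  define P where "P = (\<lambda>m U. orthonormal_list U \<and> m \<le> length U \<and> (\<Sum>k<length U. err k (U!k)) \<le> 2 - 2 * (1/2)^m)"
  define Q where "Q = (\<lambda>m U U'. \<exists>V. U' = U @ V \<and>
      l2norm (\<lambda>k. basis_vec (fst (prod_decode m)) k - proj_list U' (basis_vec (fst (prod_decode m))) k) \<le> 1 / real (m+1))"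
  have "\<exists>U'. P (Suc m) U' \<and> Q m U U'" if "P m U" for m U
  proof -
    have U: "orthonormal_list U" using that by (simp add: P_def)
    obtain V where V: "V \<noteq> []" "orthonormal_list (U @ V)"
      "(\<Sum>s<length V. err (length U + s) (V!s)) \<le> (1/2)^m"
      "l2norm (\<lambda>k. basis_vec (fst (prod_decode m)) k - proj_list (U @ V) (basis_vec (fst (prod_decode m))) k)
         \<le> 1 / real (m+1)"
      using stage_extension[OF T C C0 \<mu> U p, of m "fst (prod_decode m)"] unfolding err_def by blast
    have "(\<Sum>k<length (U @ V). err k ((U @ V)!k)) = (\<Sum>k<length U. err k (U!k)) + (\<Sum>s<length V. err (length U + s) (V!s))"
      by (simp add: sum_lessThan_add nth_append)
    also have "\<dots> \<le> 2 - 2 * (1/2)^Suc m" using that V(3) by (simp add: P_def)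
    finally have "P (Suc m) (U @ V)" using that V(1,2) by (cases V) (auto simp: P_def)
    moreover have "Q m U (U @ V)" using V(4) by (auto simp: Q_def)
    ultimately show ?thesis by blast
  qed
  moreover have "P 0 []" by (simp add: P_def orthonormal_list_def orthonormal_on_def)
  ultimately obtain Us where Us: "\<And>m. P m (Us m)" "\<And>m. Q m (Us m) (Us (Suc m))"
    using dependent_nat_choice[of P Q] by blast
  have "(\<Sum>k<length (Us m). err k (Us m ! k)) \<le> 2" for m
  proof -
    have "(\<Sum>k<length (Us m). err k (Us m ! k)) \<le> 2 - 2 * (1/2)^m" using Us(1)[of m] by (simp add: P_def)
    also have "\<dots> \<le> 2" by simp
    finally show ?thesis .
  qed
  then show ?thesis using Us by (intro that[of Us]) (auto simp: P_def Q_def err_def)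
qed

lemma prefix_chain_nth:
  fixes Us :: "nat \<Rightarrow> 'a list"
  assumes prefix: "\<And>m. \<exists>V. Us (Suc m) = Us m @ V" and len: "\<And>m. m \<le> length (Us m)"
  obtains u where "\<And>m k. k < length (Us m) \<Longrightarrow> Us m ! k = u k"
proof -
  have pref: "\<exists>W. Us (m + d) = Us m @ W" for m d
  proof (induction d)
    case (Suc d)
    then obtain W where "Us (m + d) = Us m @ W" by blast
    moreover obtain V where "Us (Suc (m + d)) = Us (m + d) @ V" using prefix by blast
    ultimately show ?case by auto
  qed simp
  have "Us m ! k = Us (Suc k) ! k" if "k < length (Us m)" for m k
  proof -
    obtain W1 where W1: "Us (m + Suc k) = Us m @ W1" using pref by blast
    obtain W2 where W2: "Us (Suc k + m) = Us (Suc k) @ W2" using pref by blast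
    have "Us m ! k = Us (m + Suc k) ! k" using W1 that by (simp add: nth_append)
    also have "\<dots> = Us (Suc k) ! k" using W2 len[of "Suc k"] by (simp add: nth_append add.commute)
    finally show ?thesis .
  qed
  then show ?thesis by (rule that[of "\<lambda>k. Us (Suc k) ! k"])
qed

lemma onb_if_basis_vec_approx:
  assumes u: "orthonormal_seq u"
    and approx: "\<And>i m. \<exists>n. l2norm (\<lambda>k. basis_vec i k - proj_on u {..<n} (basis_vec i) k) \<le> 1 / real (m+1)"
  shows "onb u"
  unfolding onb_def
proof (intro conjI u ballI impI)
  fix y assume y: "y \<in> l2" "\<forall>k. l2inner y (u k) = 0"
  have bound: "cmod (y i) * real (m+1) \<le> l2norm y" for i m
  proof -
    obtain n where n: "l2norm (\<lambda>k. basis_vec i k - proj_on u {..<n} (basis_vec i) k) \<le> 1 / real (m+1)"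
      using approx by blast
    have P: "proj_on u {..<n} (basis_vec i) \<in> l2"
      by (rule proj_on_l2[OF orthonormal_seq_imp_orthonormal_on[OF u]])
    have "l2inner y (proj_on u {..<n} (basis_vec i)) = 0"
      unfolding proj_on_def using y orthonormal_seqD(1)[OF u] by (simp add: l2inner_sum_right)
    then have "l2inner y (basis_vec i) = l2inner y (\<lambda>k. basis_vec i k - proj_on u {..<n} (basis_vec i) k)"
      using l2inner_diff_right[OF l2_basis_vec P y(1)] by simp
    then have "cmod (y i) \<le> l2norm y * l2norm (\<lambda>k. basis_vec i k - proj_on u {..<n} (basis_vec i) k)"
      using l2_cauchy_schwarz[OF y(1) l2_diff[OF l2_basis_vec P]] by (simp add: l2inner_basis_vec_right)
    also have "\<dots> \<le> l2norm y * (1 / real (m+1))"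
      by (rule mult_left_mono[OF n l2norm_nonneg[OF y(1)]])
    finally show ?thesis by (simp add: field_simps)
  qed
  show "y = (\<lambda>_. 0)"
  proof
    fix i
    show "y i = 0"
    proof (rule ccontr)
      assume "y i \<noteq> 0"
      then have pos: "cmod (y i) > 0" by simp
      then obtain m where "l2norm y < real m * cmod (y i)" using reals_Archimedean3 by blast
      moreover have "cmod (y i) * real (m+1) = real m * cmod (y i) + cmod (y i)" by (simp add: algebra_simps)
      ultimately show False using bound[of i m] pos by linarith
    qed
  qed
qed

lemma orthonormal_seq_chain_limit:
  assumes U: "\<And>m. orthonormal_list (Us m)" and len: "\<And>m. m \<le> length (Us m)"
    and u: "\<And>m k. k < length (Us m) \<Longrightarrow> Us m ! k = u k"
  shows "orthonormal_seq u"
  unfolding orthonormal_seq_def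
proof (intro conjI allI)
  fix j k
  have jk: "j < length (Us (Suc (max j k)))" "k < length (Us (Suc (max j k)))"
    using len[of "Suc (max j k)"] by auto
  then show "u k \<in> l2" "l2inner (u j) (u k) = (if j = k then 1 else 0)"
    using U u[symmetric] by (simp_all add: orthonormal_list_l2 orthonormal_list_l2inner)
qed

lemma onb_with_summable_diagonal_error:
  fixes T :: "'n::finite \<Rightarrow> op" and \<mu> :: "nat \<Rightarrow> 'n \<Rightarrow> complex"
  assumes T: "\<forall>j. bounded_op (T j)" and \<mu>: "\<forall>k. \<mu> k \<in> ess_num_range T" and p: "p > 1"
  obtains u where "onb u" "summable (\<lambda>k. maxdist (\<lambda>j. l2inner (T j (u k)) (u k)) (\<mu> k) powr p)"
proof -
  obtain C where C0: "C \<ge> 0" and C: "\<forall>j. \<forall>x\<in>l2. l2norm (T j x) \<le> C * l2norm x"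
    using bounded_op_tuple_uniform_bound[OF T] by blast
  obtain Us where Us: "\<And>m. orthonormal_list (Us m)" "\<And>m. m \<le> length (Us m)"
    "\<And>m. (\<Sum>k<length (Us m). maxdist (\<lambda>j. l2inner (T j (Us m ! k)) (Us m ! k)) (\<mu> k) powr p) \<le> 2"
    "\<And>m. \<exists>V. Us (Suc m) = Us m @ V"
    "\<And>m. l2norm (\<lambda>k. basis_vec (fst (prod_decode m)) k
            - proj_list (Us (Suc m)) (basis_vec (fst (prod_decode m))) k) \<le> 1 / real (m+1)"
    using stage_chain_exists[OF T C C0 \<mu> p] by blast
  obtain u where u: "\<And>m k. k < length (Us m) \<Longrightarrow> Us m ! k = u k"
    using prefix_chain_nth[OF Us(4,2)] by blast
  have ortho: "orthonormal_seq u" by (rule orthonormal_seq_chain_limit[OF Us(1,2) u])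
  have proj: "proj_list (Us m) = proj_on u {..<length (Us m)}" for m
    unfolding proj_list_def proj_on_def using u by (intro ext sum.cong) auto
  have "l2norm (\<lambda>k. basis_vec i k - proj_on u {..<length (Us (Suc (prod_encode (i, m))))} (basis_vec i) k)
          \<le> 1 / real (m+1)" for i m
  proof -
    have "1 / real (prod_encode (i, m) + 1) \<le> 1 / real (m + 1)"
      using le_prod_encode_2[of m i] by (simp add: frac_le)
    then show ?thesis using Us(5)[of "prod_encode (i, m)"] by (simp add: proj)
  qed
  then have "onb u" by (intro onb_if_basis_vec_approx[OF ortho]) blast
  moreover have "summable (\<lambda>k. maxdist (\<lambda>j. l2inner (T j (u k)) (u k)) (\<mu> k) powr p)"
  proof (rule summableI_nonneg_bounded)
    fix n
    have "(\<Sum>k<n. maxdist (\<lambda>j. l2inner (T j (u k)) (u k)) (\<mu> k) powr p)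
        \<le> (\<Sum>k<length (Us n). maxdist (\<lambda>j. l2inner (T j (u k)) (u k)) (\<mu> k) powr p)"
      using Us(2)[of n] by (intro sum_mono2) auto
    also have "\<dots> \<le> 2" using Us(3)[of n] u by simp
    finally show "(\<Sum>k<n. maxdist (\<lambda>j. l2inner (T j (u k)) (u k)) (\<mu> k) powr p) \<le> 2" .
  qed simp
  ultimately show ?thesis by (rule that)
qed

section \<open>Diagonal operators in Schatten classes\<close>

lemma summable_orthonormal_coordinates:
  assumes u: "orthonormal_seq u" and c: "summable (\<lambda>k. (cmod (c k))\<^sup>2)"
  shows "summable (\<lambda>k. cmod (c k * u k i))" "summable (\<lambda>k. c k * u k i)"
proof -
  have "summable (\<lambda>k. (cmod (l2inner (basis_vec i) (u k)))\<^sup>2)"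
    by (rule bessel_inequality(1)[OF u l2_basis_vec])
  moreover have "cmod (l2inner (basis_vec i) (u k)) = cmod (u k i)" for k
    using l2inner_basis_vec_left[OF orthonormal_seqD(1)[OF u, of k], of i] by simp
  ultimately have s2: "summable (\<lambda>k. (cmod (u k i))\<^sup>2)" by simp
  show "summable (\<lambda>k. cmod (c k * u k i))"
    using cauchy_schwarz_suminf(1)[OF c s2] by (simp add: norm_mult)
  then show "summable (\<lambda>k. c k * u k i)" by (rule summable_norm_cancel)
qed

lemma partial_sum_orthonormal_series_le:
  assumes u: "orthonormal_seq u" and c: "summable (\<lambda>k. (cmod (c k))\<^sup>2)"
  shows "(\<Sum>i<N. (cmod (\<Sum>k. c k * u k i))\<^sup>2) \<le> (\<Sum>k. (cmod (c k))\<^sup>2)"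
proof -
  define w where "w = (\<lambda>i. \<Sum>k. c k * u k i)"
  define B where "B = (\<Sum>k. (cmod (c k))\<^sup>2)"
  define v where "v = (\<lambda>i. if i < N then w i else 0)"
  define S where "S = (\<Sum>i<N. (cmod (w i))\<^sup>2)"
  have B0: "B \<ge> 0" unfolding B_def by (rule suminf_nonneg[OF c]) simp
  have S0: "S \<ge> 0" unfolding S_def by (rule sum_nonneg) simp
  have ul2: "u k \<in> l2" for k using orthonormal_seqD(1)[OF u] .
  have vl2: "v \<in> l2" unfolding v_def by (rule l2_finite_support[of N]) auto
  have uv: "l2inner (u k) v = (\<Sum>i<N. u k i * cnj (v i))" for k
    unfolding l2inner_def by (rule suminf_finite) (auto simp: v_def)
  have "complex_of_real S = (\<Sum>i<N. w i * cnj (v i))"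
    unfolding S_def v_def by (simp add: complex_norm_square del: of_real_power)
  also have "\<dots> = (\<Sum>i<N. \<Sum>k. c k * u k i * cnj (v i))"
    unfolding w_def by (intro sum.cong refl suminf_mult2 summable_orthonormal_coordinates(2)[OF u c])
  also have "\<dots> = (\<Sum>k. \<Sum>i<N. c k * u k i * cnj (v i))"
    by (rule suminf_sum[symmetric]) (intro summable_mult2 summable_orthonormal_coordinates(2)[OF u c])
  also have "\<dots> = (\<Sum>k. c k * l2inner (u k) v)" by (simp add: uv sum_distrib_left mult.assoc)
  finally have S_eq: "complex_of_real S = (\<Sum>k. c k * l2inner (u k) v)" .
  have coeff: "cmod (l2inner (u k) v) = cmod (l2inner v (u k))" for k
    using l2inner_commute[OF vl2 ul2[of k]] by simp
  have sI: "summable (\<lambda>k. (cmod (l2inner (u k) v))\<^sup>2)"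
    using bessel_inequality(1)[OF u vl2] by (simp add: coeff)
  have "(l2norm v)\<^sup>2 = (\<Sum>k<N. (cmod (v k))\<^sup>2)"
    using l2norm_power2[OF vl2] suminf_finite[of "{..<N}" "\<lambda>k. (cmod (v k))\<^sup>2"] by (simp add: v_def)
  then have vn: "(l2norm v)\<^sup>2 = S" by (simp add: S_def v_def)
  have "S = cmod (complex_of_real S)" using S0 by simp
  also have "\<dots> \<le> (\<Sum>k. cmod (c k) * cmod (l2inner (u k) v))"
    unfolding S_eq using summable_norm[of "\<lambda>k. c k * l2inner (u k) v"] cauchy_schwarz_suminf(1)[OF c sI]
    by (simp add: norm_mult)
  also have "\<dots> \<le> sqrt B * sqrt (\<Sum>k. (cmod (l2inner (u k) v))\<^sup>2)"
    unfolding B_def by (rule cauchy_schwarz_suminf(2)[OF c sI]) auto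
  also have "\<dots> \<le> sqrt B * sqrt S"
    using bessel_inequality(2)[OF u vl2] vn B0 by (intro mult_left_mono real_sqrt_le_mono) (simp_all add: coeff)
  finally have "S \<le> (sqrt B)\<^sup>2" by (rule le_sqrt_mult_imp_le[OF S0 real_sqrt_ge_zero[OF B0]])
  then show ?thesis using B0 by (simp add: S_def B_def w_def)
qed

lemma l2_orthonormal_series:
  assumes u: "orthonormal_seq u" and c: "summable (\<lambda>k. (cmod (c k))\<^sup>2)"
  shows "(\<lambda>i. \<Sum>k. c k * u k i) \<in> l2" "(l2norm (\<lambda>i. \<Sum>k. c k * u k i))\<^sup>2 \<le> (\<Sum>k. (cmod (c k))\<^sup>2)"
proof -
  note partial = partial_sum_orthonormal_series_le[OF u c]
  have sw: "summable (\<lambda>i. (cmod (\<Sum>k. c k * u k i))\<^sup>2)"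
    by (rule summableI_nonneg_bounded[OF _ partial]) simp
  then show l2: "(\<lambda>i. \<Sum>k. c k * u k i) \<in> l2" by (simp add: l2_def)
  show "(l2norm (\<lambda>i. \<Sum>k. c k * u k i))\<^sup>2 \<le> (\<Sum>k. (cmod (c k))\<^sup>2)"
    unfolding l2norm_power2[OF l2] by (rule suminf_le_const[OF sw partial])
qed

definition diag_op :: "(nat \<Rightarrow> vec) \<Rightarrow> (nat \<Rightarrow> complex) \<Rightarrow> op" where
  "diag_op u d x = (\<lambda>i. \<Sum>k. d k * l2inner x (u k) * u k i)"

lemma diag_op_coeffs:
  assumes u: "orthonormal_seq u" and d: "\<And>k. cmod (d k) \<le> D" and x: "x \<in> l2"
  shows "summable (\<lambda>k. (cmod (d k * l2inner x (u k)))\<^sup>2)"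
    "(\<Sum>k. (cmod (d k * l2inner x (u k)))\<^sup>2) \<le> D\<^sup>2 * (l2norm x)\<^sup>2"
proof -
  have le: "(cmod (d k * l2inner x (u k)))\<^sup>2 \<le> D\<^sup>2 * (cmod (l2inner x (u k)))\<^sup>2" for k
  proof -
    have "cmod (d k * l2inner x (u k)) \<le> D * cmod (l2inner x (u k))"
      unfolding norm_mult by (rule mult_right_mono[OF d]) simp
    then have "(cmod (d k * l2inner x (u k)))\<^sup>2 \<le> (D * cmod (l2inner x (u k)))\<^sup>2"
      by (rule power_mono) simp
    then show ?thesis by (simp add: power_mult_distrib)
  qed
  have s: "summable (\<lambda>k. D\<^sup>2 * (cmod (l2inner x (u k)))\<^sup>2)"
    by (intro summable_mult bessel_inequality(1)[OF u x])
  show s1: "summable (\<lambda>k. (cmod (d k * l2inner x (u k)))\<^sup>2)"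
    by (rule summable_comparison_test'[OF s, of 0]) (use le in auto)
  have "(\<Sum>k. (cmod (d k * l2inner x (u k)))\<^sup>2) \<le> (\<Sum>k. D\<^sup>2 * (cmod (l2inner x (u k)))\<^sup>2)"
    by (rule suminf_le[OF le s1 s])
  also have "\<dots> = D\<^sup>2 * (\<Sum>k. (cmod (l2inner x (u k)))\<^sup>2)"
    by (rule suminf_mult[OF bessel_inequality(1)[OF u x]])
  also have "\<dots> \<le> D\<^sup>2 * (l2norm x)\<^sup>2"
    by (rule mult_left_mono[OF bessel_inequality(2)[OF u x]]) simp
  finally show "(\<Sum>k. (cmod (d k * l2inner x (u k)))\<^sup>2) \<le> D\<^sup>2 * (l2norm x)\<^sup>2" .
qed

lemma diag_op_l2:
  assumes u: "orthonormal_seq u" and d: "\<And>k. cmod (d k) \<le> D" and x: "x \<in> l2"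
  shows "diag_op u d x \<in> l2" "l2norm (diag_op u d x) \<le> D * l2norm x"
proof -
  note c = diag_op_coeffs[of u d D x, OF u d x]
  have eq: "diag_op u d x = (\<lambda>i. \<Sum>k. (d k * l2inner x (u k)) * u k i)" by (simp add: diag_op_def)
  show kl: "diag_op u d x \<in> l2" unfolding eq by (rule l2_orthonormal_series(1)[OF u c(1)])
  have "(l2norm (diag_op u d x))\<^sup>2 \<le> D\<^sup>2 * (l2norm x)\<^sup>2"
    unfolding eq using l2_orthonormal_series(2)[OF u c(1)] c(2) by linarith
  also have "\<dots> = (\<bar>D\<bar> * l2norm x)\<^sup>2" by (simp add: power_mult_distrib)
  finally have "l2norm (diag_op u d x) \<le> \<bar>D\<bar> * l2norm x"
    by (rule power2_le_imp_le) (use l2norm_nonneg[OF x] in simp_all)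
  moreover have "D \<ge> 0" using d[of 0] by (meson norm_ge_zero order_trans)
  ultimately show "l2norm (diag_op u d x) \<le> D * l2norm x" by simp
qed

lemma summable_diag_op:
  assumes u: "orthonormal_seq u" and d: "\<And>k. cmod (d k) \<le> D" and x: "x \<in> l2"
  shows "summable (\<lambda>k. d k * l2inner x (u k) * u k i)"
  using summable_orthonormal_coordinates(2)[OF u diag_op_coeffs(1)[OF u d x]] by simp

lemma bounded_op_diag_op:
  assumes u: "orthonormal_seq u" and d: "\<And>k. cmod (d k) \<le> D"
  shows "bounded_op (diag_op u d)"
  unfolding bounded_op_def
proof (intro conjI ballI allI exI)
  fix x assume "x \<in> l2"
  then show "diag_op u d x \<in> l2" by (rule diag_op_l2[of u d D, OF u d])
next
  fix x y assume x: "x \<in> l2" and y: "y \<in> l2"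
  have ul2: "u k \<in> l2" for k by (rule orthonormal_seqD(1)[OF u])
  show "diag_op u d (\<lambda>i. x i + y i) = (\<lambda>i. diag_op u d x i + diag_op u d y i)"
  proof
    fix i
    have "diag_op u d (\<lambda>i. x i + y i) i = (\<Sum>k. d k * l2inner x (u k) * u k i + d k * l2inner y (u k) * u k i)"
      unfolding diag_op_def by (simp add: l2inner_add_left[OF x y ul2] algebra_simps)
    also have "\<dots> = diag_op u d x i + diag_op u d y i"
      unfolding diag_op_def by (rule suminf_add[symmetric, OF summable_diag_op[of u d D x, OF u d x] summable_diag_op[of u d D y, OF u d y]])
    finally show "diag_op u d (\<lambda>i. x i + y i) i = diag_op u d x i + diag_op u d y i" .
  qed
next
  fix x c assume x: "x \<in> l2"
  have ul2: "u k \<in> l2" for k by (rule orthonormal_seqD(1)[OF u])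
  show "diag_op u d (\<lambda>i. c * x i) = (\<lambda>i. c * diag_op u d x i)"
  proof
    fix i
    have "diag_op u d (\<lambda>i. c * x i) i = (\<Sum>k. c * (d k * l2inner x (u k) * u k i))"
      unfolding diag_op_def by (simp add: l2inner_scale_left[OF x ul2] algebra_simps)
    also have "\<dots> = c * diag_op u d x i"
      unfolding diag_op_def by (rule suminf_mult[OF summable_diag_op[of u d D x, OF u d x]])
    finally show "diag_op u d (\<lambda>i. c * x i) i = c * diag_op u d x i" .
  qed
next
  fix x assume "x \<in> l2"
  then show "l2norm (diag_op u d x) \<le> D * l2norm x" by (rule diag_op_l2[of u d D, OF u d])
qed

lemma diag_op_eigenvector:
  assumes u: "orthonormal_seq u"
  shows "diag_op u d (u k) = (\<lambda>i. d k * u k i)"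
proof
  fix i
  have "diag_op u d (u k) i = (\<Sum>l\<in>{k}. d l * l2inner (u k) (u l) * u l i)"
    unfolding diag_op_def by (rule suminf_finite) (use orthonormal_seqD(4)[OF u] in auto)
  then show "diag_op u d (u k) i = d k * u k i" using orthonormal_seqD(2)[OF u] by simp
qed

lemma diag_op_finite_support:
  assumes "finite S"
  shows "diag_op u (\<lambda>k. if k \<in> S then d k else 0) x = (\<lambda>i. \<Sum>k\<in>S. d k * l2inner x (u k) * u k i)"
proof
  fix i show "diag_op u (\<lambda>k. if k \<in> S then d k else 0) x i = (\<Sum>k\<in>S. d k * l2inner x (u k) * u k i)"
    unfolding diag_op_def using assms by (subst suminf_finite[of S]) auto
qed

lemma diag_op_split:
  assumes u: "orthonormal_seq u" and d: "\<And>k. cmod (d k) \<le> D" and x: "x \<in> l2"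
  shows "diag_op u d x i - diag_op u (\<lambda>k. if k \<in> S then d k else 0) x i = diag_op u (\<lambda>k. if k \<in> S then 0 else d k) x i"
proof -
  have D0: "D \<ge> 0" using d[of 0] by (meson norm_ge_zero order_trans)
  have d1: "cmod (if k \<in> S then d k else 0) \<le> D" for k using d[of k] D0 by auto
  have d2: "cmod (if k \<in> S then 0 else d k) \<le> D" for k using d[of k] D0 by auto
  have "diag_op u d x i = (\<Sum>k. (if k \<in> S then d k else 0) * l2inner x (u k) * u k i + (if k \<in> S then 0 else d k) * l2inner x (u k) * u k i)"
    unfolding diag_op_def by (rule suminf_cong) auto
  also have "\<dots> = diag_op u (\<lambda>k. if k \<in> S then d k else 0) x i + diag_op u (\<lambda>k. if k \<in> S then 0 else d k) x i"
    unfolding diag_op_def by (rule suminf_add[symmetric, OF summable_diag_op[of u _ D x, OF u d1 x] summable_diag_op[of u _ D x, OF u d2 x]])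
  finally show ?thesis by simp
qed

lemma rank_le_diag_op_finite_support:
  assumes u: "orthonormal_seq u" and S: "finite S" "card S \<le> n"
  shows "rank_le (diag_op u (\<lambda>k. if k \<in> S then d k else 0)) n"
proof -
  obtain h where h: "bij_betw h {0..<card S} S" using ex_bij_betw_nat_finite[OF S(1)] by blast
  define v where "v = (\<lambda>a. if a < card S then u (h a) else (\<lambda>_. 0))"
  have vl2: "\<forall>a<n. v a \<in> l2" using orthonormal_seqD(1)[OF u] by (auto simp: v_def)
  have ex: "\<exists>c. diag_op u (\<lambda>k. if k \<in> S then d k else 0) x = (\<lambda>m. \<Sum>a<n. c a * v a m)" for x
  proof (intro exI ext)
    fix m
    define c where "c = (\<lambda>a. if a < card S then d (h a) * l2inner x (u (h a)) else 0)"
    have "(\<Sum>a<n. c a * v a m) = (\<Sum>a\<in>{0..<card S}. c a * v a m)"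
      by (rule sum.mono_neutral_right) (use S(2) in \<open>auto simp: c_def\<close>)
    also have "\<dots> = (\<Sum>a\<in>{0..<card S}. d (h a) * l2inner x (u (h a)) * u (h a) m)"
      by (rule sum.cong) (auto simp: c_def v_def)
    also have "\<dots> = (\<Sum>k\<in>S. d k * l2inner x (u k) * u k m)"
      by (rule sum.reindex_bij_betw[OF h])
    finally show "diag_op u (\<lambda>k. if k \<in> S then d k else 0) x m = (\<Sum>a<n. c a * v a m)"
      by (simp add: diag_op_finite_support[OF S(1)])
  qed
  show ?thesis unfolding rank_le_def by (rule exI[of _ v]) (use vl2 ex in simp)
qed

lemma opnorm_le:
  assumes "s \<ge> 0" "\<And>x. x \<in> l2 \<Longrightarrow> l2norm (G x) \<le> s * l2norm x"
  shows "opnorm G \<le> s"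
  unfolding opnorm_def
proof (rule cSup_least)
  show "{l2norm (G x) |x. x \<in> l2 \<and> l2norm x \<le> 1} \<noteq> {}" using l2_zero by fastforce
next
  fix z assume "z \<in> {l2norm (G x) |x. x \<in> l2 \<and> l2norm x \<le> 1}"
  then obtain x where x: "x \<in> l2" "l2norm x \<le> 1" "z = l2norm (G x)" by blast
  have "z \<le> s * l2norm x" using assms(2)[OF x(1)] x(3) by simp
  also have "\<dots> \<le> s * 1" by (rule mult_left_mono[OF x(2) assms(1)])
  finally show "z \<le> s" by simp
qed

lemma opnorm_nonneg:
  assumes G: "bounded_op G" shows "0 \<le> opnorm G"
proof -
  obtain C where C: "C \<ge> 0" "\<And>x. x \<in> l2 \<Longrightarrow> l2norm (G x) \<le> C * l2norm x"
    using bounded_opE[OF G] by blast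
  have "bdd_above {l2norm (G x) |x. x \<in> l2 \<and> l2norm x \<le> 1}"
  proof (rule bdd_aboveI)
    fix z assume "z \<in> {l2norm (G x) |x. x \<in> l2 \<and> l2norm x \<le> 1}"
    then obtain x where x: "x \<in> l2" "l2norm x \<le> 1" "z = l2norm (G x)" by blast
    have "z \<le> C * l2norm x" using C(2)[OF x(1)] x(3) by simp
    also have "\<dots> \<le> C * 1" by (rule mult_left_mono[OF x(2) C(1)])
    finally show "z \<le> C" by simp
  qed
  moreover have "l2norm (G (\<lambda>_. 0)) \<in> {l2norm (G x) |x. x \<in> l2 \<and> l2norm x \<le> 1}" by auto
  ultimately have "l2norm (G (\<lambda>_. 0)) \<le> opnorm G" unfolding opnorm_def by (rule cSup_upper[rotated])
  then show ?thesis using bounded_op_zero[OF G] by simp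
qed

lemma bounded_op_diff_op:
  assumes K: "bounded_op K" and F: "bounded_op F"
  shows "bounded_op (\<lambda>x i. K x i - F x i)"
proof -
  obtain C1 where C1: "C1 \<ge> 0" "\<And>x. x \<in> l2 \<Longrightarrow> l2norm (K x) \<le> C1 * l2norm x"
    using bounded_opE[OF K] by blast
  obtain C2 where C2: "C2 \<ge> 0" "\<And>x. x \<in> l2 \<Longrightarrow> l2norm (F x) \<le> C2 * l2norm x"
    using bounded_opE[OF F] by blast
  have b: "l2norm (\<lambda>i. K x i - F x i) \<le> (C1 + C2) * l2norm x" if x: "x \<in> l2" for x
  proof -
    have "l2norm (\<lambda>i. K x i - F x i) = l2norm (\<lambda>i. K x i + (-1) * F x i)" by simp
    also have "\<dots> \<le> l2norm (K x) + l2norm (\<lambda>i. (-1) * F x i)"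
      by (rule l2norm_triangle[OF bounded_op_l2[OF K x] l2_scale[OF bounded_op_l2[OF F x]]])
    also have "l2norm (\<lambda>i. (-1) * F x i) = l2norm (F x)"
      using l2norm_scale[OF bounded_op_l2[OF F x], of "-1"] by simp
    finally show ?thesis using C1(2)[OF x] C2(2)[OF x] by (simp add: algebra_simps)
  qed
  have ex: "\<exists>C. \<forall>x\<in>l2. l2norm (\<lambda>i. K x i - F x i) \<le> C * l2norm x" using b by blast
  show ?thesis unfolding bounded_op_def
    using K F ex by (auto simp: bounded_op_l2 l2_diff bounded_op_add bounded_op_scale algebra_simps)
qed

lemma approx_num_bounds:
  assumes K: "bounded_op K" and F0: "bounded_op F0" "rank_le F0 k" and s: "s \<ge> 0"
  and b: "\<And>x. x \<in> l2 \<Longrightarrow> l2norm (\<lambda>i. K x i - F0 x i) \<le> s * l2norm x"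
  shows "0 \<le> approx_num K k" "approx_num K k \<le> s"
proof -
  let ?A = "{opnorm (\<lambda>x i. K x i - F x i) | F. bounded_op F \<and> rank_le F k}"
  have mem: "opnorm (\<lambda>x i. K x i - F0 x i) \<in> ?A" using F0 by blast
  have lb: "\<forall>z\<in>?A. 0 \<le> z" using opnorm_nonneg[OF bounded_op_diff_op[OF K]] by auto
  show "0 \<le> approx_num K k" unfolding approx_num_def by (rule cInf_greatest) (use mem lb in auto)
  have "approx_num K k \<le> opnorm (\<lambda>x i. K x i - F0 x i)" unfolding approx_num_def
    by (rule cInf_lower[OF mem]) (use lb in \<open>auto simp: bdd_below_def\<close>)
  also have "\<dots> \<le> s" by (rule opnorm_le[OF s b])
  finally show "approx_num K k \<le> s" .
qed

lemma ex_argmax_outside_finite: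
  fixes b :: "nat \<Rightarrow> real"
  assumes b0: "\<And>k. b k \<ge> 0" and bt: "b \<longlonglongrightarrow> 0" and S: "finite S"
  shows "\<exists>M. M \<notin> S \<and> (\<forall>l. l \<notin> S \<longrightarrow> b l \<le> b M)"
proof (cases "\<forall>l. l \<notin> S \<longrightarrow> b l = 0")
  case True
  obtain l0 where "l0 \<notin> S" using ex_new_if_finite[OF infinite_UNIV_nat S] by blast
  then show ?thesis using True by (intro exI[of _ l0]) auto
next
  case False
  then obtain l1 where l1': "l1 \<notin> S" "b l1 \<noteq> 0" by blast
  have l1: "l1 \<notin> S" "b l1 > 0" using l1' b0[of l1] by auto
  have "eventually (\<lambda>n. b n < b l1) sequentially" using bt l1(2) by (rule order_tendstoD)
  then obtain N where N: "\<And>n. n \<ge> N \<Longrightarrow> b n < b l1" by (auto simp: eventually_sequentially)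
  define A where "A = {l. l \<notin> S \<and> b l1 \<le> b l}"
  have Afin: "finite A"
  proof (rule finite_subset[of _ "{..<N}"])
    show "A \<subseteq> {..<N}"
    proof
      fix l assume "l \<in> A"
      then have "b l1 \<le> b l" by (simp add: A_def)
      then show "l \<in> {..<N}" using N[of l] by (cases "N \<le> l") auto
    qed
  qed simp
  have l1A: "l1 \<in> A" using l1 by (simp add: A_def)
  obtain M where M: "M \<in> A" "b M = Max (b ` A)"
    using Max_in[of "b ` A"] Afin l1A by (metis empty_iff finite_imageI image_iff image_is_empty)
  have "b l \<le> b M" if "l \<notin> S" for l
  proof (cases "b l1 \<le> b l")
    case True then have "l \<in> A" using that by (simp add: A_def)
    then show ?thesis using M(2) Afin by simp
  next
    case False
    have "b l1 \<le> b M" using M(1) by (simp add: A_def)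
    then show ?thesis using False by simp
  qed
  then show ?thesis using M(1) by (intro exI[of _ M]) (auto simp: A_def)
qed

lemma greedy_enumeration:
  fixes b :: "nat \<Rightarrow> real"
  assumes b0: "\<And>k. b k \<ge> 0" and bt: "b \<longlonglongrightarrow> 0"
  obtains g :: "nat \<Rightarrow> nat" where "inj g" "\<And>k l. l \<notin> g ` {..<k} \<Longrightarrow> b l \<le> b (g k)"
proof -
  define Mf where "Mf = (\<lambda>S. SOME M. M \<notin> S \<and> (\<forall>l. l \<notin> S \<longrightarrow> b l \<le> b M))"
  have Mf: "Mf S \<notin> S" "\<And>l. l \<notin> S \<Longrightarrow> b l \<le> b (Mf S)" if "finite S" for S
    using someI_ex[OF ex_argmax_outside_finite[OF b0 bt that]] by (auto simp: Mf_def)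
  define Sq where "Sq = rec_nat {} (\<lambda>k S. insert (Mf S) S)"
  define g where "g = (\<lambda>k. Mf (Sq k))"
  have Sq: "Sq k = g ` {..<k}" for k
  proof (induction k)
    case (Suc k)
    have "Sq (Suc k) = insert (g k) (Sq k)" by (simp add: Sq_def g_def)
    then show ?case using Suc by (simp add: lessThan_Suc)
  qed (simp add: Sq_def)
  have g_eq: "g k = Mf (g ` {..<k})" for k
  proof -
    have "g k = Mf (Sq k)" by (simp add: g_def)
    then show ?thesis by (simp only: Sq)
  qed
  have new: "g k \<notin> g ` {..<k}" for k
    unfolding g_eq[of k] by (rule Mf(1)[OF finite_imageI[OF finite_lessThan]])
  have "inj g"
  proof (rule injI)
    fix j k assume "g j = g k"
    then show "j = k" using new[of j] new[of k] by (metis image_eqI lessThan_iff linorder_neqE_nat)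
  qed
  moreover have "b l \<le> b (g k)" if "l \<notin> g ` {..<k}" for k l
    unfolding g_eq[of k] by (rule Mf(2)[OF finite_imageI[OF finite_lessThan] that])
  ultimately show ?thesis by (rule that)
qed

(* s k is the (k+1)-st largest value of a. *)
lemma decreasing_majorant_exists:
  fixes a :: "nat \<Rightarrow> real"
  assumes p: "p > 0" and a0: "\<And>k. a k \<ge> 0" and sa: "summable (\<lambda>k. a k powr p)"
  obtains s where "\<And>k. s k \<ge> 0" "summable (\<lambda>k. s k powr p)"
    "\<And>k. \<exists>S. finite S \<and> card S \<le> k \<and> (\<forall>l. l \<notin> S \<longrightarrow> a l \<le> s k)"
proof -
  obtain g :: "nat \<Rightarrow> nat" where g: "inj g" "\<And>k l. l \<notin> g ` {..<k} \<Longrightarrow> a l powr p \<le> a (g k) powr p"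
    by (rule greedy_enumeration[of "\<lambda>k. a k powr p", OF powr_ge_zero summable_LIMSEQ_zero[OF sa]]) blast
  have le: "a l \<le> a (g k)" if "l \<notin> g ` {..<k}" for k l
  proof (rule ccontr)
    assume "\<not> a l \<le> a (g k)"
    then have "a (g k) powr p < a l powr p" using p a0 by (intro powr_less_mono2) auto
    then show False using g(2)[OF that] by simp
  qed
  have "(\<Sum>k<n. a (g k) powr p) \<le> (\<Sum>k. a k powr p)" for n
  proof -
    have "(\<Sum>k<n. a (g k) powr p) = (\<Sum>l\<in>g ` {..<n}. a l powr p)"
      using inj_on_subset[OF g(1) subset_UNIV] by (simp add: sum.reindex)
    also have "\<dots> \<le> (\<Sum>k. a k powr p)"
      by (rule sum_le_suminf[OF sa finite_imageI[OF finite_lessThan]]) simp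
    finally show ?thesis .
  qed
  then have "summable (\<lambda>k. a (g k) powr p)" by (rule summableI_nonneg_bounded[rotated]) simp
  moreover have "\<exists>S. finite S \<and> card S \<le> k \<and> (\<forall>l. l \<notin> S \<longrightarrow> a l \<le> a (g k))" for k
    using le card_image_le[of "{..<k}" g] by (intro exI[of _ "g ` {..<k}"]) auto
  ultimately show ?thesis using a0 by (intro that[of "\<lambda>k. a (g k)"])
qed

lemma schatten_diag_op:
  assumes u: "orthonormal_seq u" and p: "p > 0" and d: "summable (\<lambda>k. cmod (d k) powr p)"
  shows "schatten p (diag_op u d)"
proof -
  obtain s where s: "\<And>k. s k \<ge> 0" "summable (\<lambda>k. s k powr p)"
    "\<And>k. \<exists>S. finite S \<and> card S \<le> k \<and> (\<forall>l. l \<notin> S \<longrightarrow> cmod (d l) \<le> s k)"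
    using decreasing_majorant_exists[OF p norm_ge_zero d] by blast
  have D: "cmod (d l) \<le> s 0" for l using s(3)[of 0] by auto
  have K: "bounded_op (diag_op u d)" by (rule bounded_op_diag_op[OF u D])
  have approx: "0 \<le> approx_num (diag_op u d) k \<and> approx_num (diag_op u d) k \<le> s k" for k
  proof -
    obtain S where S: "finite S" "card S \<le> k" "\<forall>l. l \<notin> S \<longrightarrow> cmod (d l) \<le> s k"
      using s(3) by blast
    \<comment> \<open>keeping the k largest diagonal entries gives a rank-k approximation with error at most s k\<close>
    define F where "F = diag_op u (\<lambda>l. if l \<in> S then d l else 0)"
    have F: "bounded_op F" unfolding F_def by (rule bounded_op_diag_op[OF u, of _ "s 0"]) (use D s(1) in auto)
    have rank: "rank_le F k" unfolding F_def by (rule rank_le_diag_op_finite_support[OF u S(1,2)])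
    have tail: "cmod (if l \<in> S then 0 else d l) \<le> s k" for l using S(3) s(1)[of k] by auto
    have "l2norm (\<lambda>i. diag_op u d x i - F x i) \<le> s k * l2norm x" if x: "x \<in> l2" for x
      using diag_op_l2(2)[OF u tail x] diag_op_split[OF u D x] by (simp add: F_def)
    then show ?thesis using approx_num_bounds[OF K F rank s(1)] by blast
  qed
  have "summable (\<lambda>k. approx_num (diag_op u d) k powr p)"
    by (rule summable_comparison_test'[OF s(2), of 0]) (use approx p in \<open>auto intro: powr_mono2\<close>)
  then show ?thesis using K by (simp add: schatten_def)
qed

lemma l2inner_add_diag_op_basis:
  assumes T: "bounded_op T" and u: "orthonormal_seq u"
  shows "l2inner (\<lambda>i. T (u k) i + diag_op u d (u k) i) (u k) = l2inner (T (u k)) (u k) + d k"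
proof -
  note uD = orthonormal_seqD[OF u]
  have "l2inner (\<lambda>i. T (u k) i + diag_op u d (u k) i) (u k)
      = l2inner (T (u k)) (u k) + l2inner (\<lambda>i. d k * u k i) (u k)"
    unfolding diag_op_eigenvector[OF u] by (rule l2inner_add_left[OF bounded_op_l2[OF T uD(1)] l2_scale[OF uD(1)] uD(1)])
  then show ?thesis using uD(2) by (simp add: l2inner_scale_left[OF uD(1) uD(1)])
qed

theorem corollary5p1:
  fixes T :: "'n::finite \<Rightarrow> op" and p :: real and lam :: "nat \<Rightarrow> 'n \<Rightarrow> complex"
  assumes "\<forall>j. bounded_op (T j)"
    and "p > 1"
    and "summable (\<lambda>k. (setdist_max (lam k) (ess_num_range T)) powr p)"
  shows "\<exists>K :: 'n \<Rightarrow> op. (\<forall>j. schatten p (K j)) \<and>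
           lam \<in> diag_set (\<lambda>j x i. T j x i + K j x i)"
proof -
  note T = assms(1) and p = assms(2)
  have p0: "p > 0" and W: "ess_num_range T \<noteq> {}" using p ess_num_range_nonempty[OF T] by simp_all
  obtain \<mu> where \<mu>: "\<forall>k. \<mu> k \<in> ess_num_range T"
    and near: "\<And>k. maxdist (lam k) (\<mu> k) < setdist_max (lam k) (ess_num_range T) + (1/2)^k"
    by (rule near_best_approximations_exist[OF W, of lam]) blast
  obtain u where u: "onb u" and err: "summable (\<lambda>k. maxdist (\<lambda>j. l2inner (T j (u k)) (u k)) (\<mu> k) powr p)"
    by (rule onb_with_summable_diagonal_error[OF T \<mu> p])
  have uo: "orthonormal_seq u" using u by (simp add: onb_def)
  have "summable (\<lambda>k. maxdist (lam k) (\<lambda>j. l2inner (T j (u k)) (u k)) powr p)"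
    by (rule summable_powr_maxdist_near_best[OF p0 W assms(3) near err])
  then have d: "summable (\<lambda>k. cmod (lam k j - l2inner (T j (u k)) (u k)) powr p)" for j
    by (rule summable_comparison_test'[of _ 0]) (use p0 in \<open>auto intro!: powr_mono2 maxdist_ge\<close>)
  define K where "K = (\<lambda>j. diag_op u (\<lambda>k. lam k j - l2inner (T j (u k)) (u k)))"
  have "lam = (\<lambda>k j. l2inner ((\<lambda>j x i. T j x i + K j x i) j (u k)) (u k))"
    using l2inner_add_diag_op_basis[OF spec[OF T] uo] by (simp add: K_def)
  then have "lam \<in> diag_set (\<lambda>j x i. T j x i + K j x i)" unfolding diag_set_def using u by blast
  moreover have "schatten p (K j)" for j unfolding K_def by (rule schatten_diag_op[OF uo p0 d])
  ultimately show ?thesis by blast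
qed

end
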